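(* Let $C$ be an $(n,(n-k)/2,\delta;\mu)_q$ convolutional code over $\mathbf F_q$ such that $C\subseteq C^\perp$ (Euclidean dual). Then there exists an $[(n,k,n\mu;\delta,d_f)]_q$ convolutional stabilizer code with $d_f=\mathrm{wt}(C^\perp\setminus C)$. It is pure if $\mathrm{wt}(C^\perp\setminus C)=\mathrm{wt}(C^\perp)$.
   Context: Classical convolutional codes: An $(n,k,\delta;\mu)_q$ convolutional code is a submodule $\{u(D)G(D)\}$ of $\mathbf F_q[D]^n$ generated by a right-invertible $G(D)=(g_{ij})\in\mathbf F_q[D]^{k\times n}$ with $\nu_i=\max_j\deg g_{ij}$, degree $\delta=\sum\nu_i$ equal to the maximal degree of a $k\times k$ minor, memory $\mu=\max\nu_i$. Weight = number of nonzero coefficients; for a set $A$, $\mathrm{wt}(A)$ is the minimal weight of a nonzero element. $\Gamma_q$ = finitely supported sequences over $\mathbf F_q$; $\sigma$ maps $(u_0,\dots,u_{n-1})\in\mathbf F_q[D]^n$ to the coefficients of $\sum_iD^iu_i(D^n)$; codes are identified with their images. Euclidean dual $C^\perp=\{u\in\Gamma_q:\sum_iu_iv_i=0\ \forall v\in C\}$. Quantum setup: $X(a)|x\rangle=|x+a\rangle$, $Z(b)|x\rangle=\omega^{\mathrm{tr}(bx)}|x\rangle$ on $\mathbf C^q$ ($\omega=e^{2\pi i/p}$, $p=\mathrm{char}\,\mathbf F_q$), $I=X(0)$. $P_t$ is the group generated by $((t+1)n+m)$-fold tensor products of the $X(a),Z(b)$, with center $Z_t$; $P_\infty$ the group of infinite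 tensor products with almost all factors $I$. For abelian $S_0\le P_0$, $S_t=\langle N\otimes I^{\otimes n},I^{\otimes tn}\otimes M: N\in S_{t-1},M\in S_0\rangle$, with conditions (S1) $I^{\otimes tn}\otimes M$, $N\otimes I^{\otimes tn}$ commute for $M,N\in S_0$, $t\ge1$; (S2) $\dim_{\mathbf F_q}S_tZ_t/Z_t=(t+1)(n-k)$; (S3) $S_t\cap Z_t$ trivial. $S=\langle I^{\otimes tn}\otimes M\otimes I^{\otimes\infty}\rangle$; its $+1$-eigenspace is an $[(n,k,m)]_q$ convolutional stabilizer code. Weight of $E\in P_\infty$ = number of non-identity factors; $d_f=\min\{\mathrm{wt}(e): e\in C_{P_\infty}(S)\setminus Z(P_\infty)S\}$. With normal basis $(\beta,\beta^q)$ of $\mathbf F_{q^2}/\mathbf F_q$, $\tau(\omega^cX(a_0)Z(b_0)\otimes\cdots)=(\beta a_0+\beta^qb_0,\dots)$; the degree of the quantum code is the degree of $\sigma^{-1}\tau(S)$. $[(n,k,m;\delta,d_f)]_q$ denotes a code of degree $\delta$ and free distance $d_f$. Pure: the stabilizer contains no element of weight less than $d_f$ other than scalars. *)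

theory Defs
  imports "HOL-Computational_Algebra.Polynomial" "HOL-Library.Cardinality"
          "Jordan_Normal_Form.Determinant" "Jordan_Normal_Form.DL_Submatrix"
begin

definition row_deg :: "'a::field poly mat \<Rightarrow> nat \<Rightarrow> nat" where
  "row_deg G i = Max (insert 0 {degree (G $$ (i,j)) | j. j < dim_col G})"

definition is_conv_code :: "nat \<Rightarrow> nat \<Rightarrow> nat \<Rightarrow> nat \<Rightarrow> 'a::field poly vec set \<Rightarrow> bool" where
  "is_conv_code n k \<delta> \<mu> C \<longleftrightarrow>
     (\<exists>G :: 'a poly mat. G \<in> carrier_mat k n \<and>
        (\<exists>H. H \<in> carrier_mat n k \<and> G * H = 1\<^sub>m k) \<and>
        C = {transpose_mat G *\<^sub>v u | u. u \<in> carrier_vec k} \<and>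
        \<delta> = (\<Sum>i<k. row_deg G i) \<and>
        \<delta> = Max {degree (det (submatrix G {..<k} J)) | J. J \<subseteq> {..<n} \<and> card J = k} \<and>
        \<mu> = Max (insert 0 (row_deg G ` {..<k})))"

text \<open>sigma: (u_0,...,u_{n-1}) maps to the coefficient sequence of sum_i D^i u_i(D^n).\<close>
definition sigma :: "nat \<Rightarrow> 'a::zero poly vec \<Rightarrow> nat \<Rightarrow> 'a" where
  "sigma n u j = coeff (u $ (j mod n)) (j div n)"

definition fsupp :: "(nat \<Rightarrow> 'a::zero) \<Rightarrow> bool" where
  "fsupp v \<longleftrightarrow> finite {i. v i \<noteq> 0}"

definition edual :: "(nat \<Rightarrow> 'a::field) set \<Rightarrow> (nat \<Rightarrow> 'a) set" where
  "edual A = {v. fsupp v \<and> (\<forall>w\<in>A. (\<Sum>i\<in>{i. v i \<noteq> 0}. v i * w i) = 0)}"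

definition seq_wt :: "(nat \<Rightarrow> 'a::zero) \<Rightarrow> nat" where
  "seq_wt v = card {i. v i \<noteq> 0}"

definition wt_set :: "(nat \<Rightarrow> 'a::zero) set \<Rightarrow> nat" where
  "wt_set A = Inf {seq_wt v | v. v \<in> A \<and> v \<noteq> (\<lambda>_. 0)}"

text \<open>An element omega^c X(a) Z(b) (infinite tensor product, almost all factors I) is
  represented by (c, a, b) with c in Z_p and a, b finitely supported.\<close>
type_synonym 'a pauli = "nat \<times> (nat \<Rightarrow> 'a) \<times> (nat \<Rightarrow> 'a)"

definition ext_deg :: "'a::{field,finite} itself \<Rightarrow> nat" where
  "ext_deg _ = (LEAST e. CARD('a) = CHAR('a) ^ e)"

definition tr :: "'a::{field,finite} \<Rightarrow> 'a" where
  "tr x = (\<Sum>i<ext_deg TYPE('a). x ^ (CHAR('a) ^ i))"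

definition trn :: "'a::{field,finite} \<Rightarrow> nat" where
  "trn x = (THE j. j < CHAR('a) \<and> of_nat j = tr x)"

definition phase :: "(nat \<Rightarrow> 'a::{field,finite}) \<Rightarrow> (nat \<Rightarrow> 'a) \<Rightarrow> nat" where
  "phase b a = (\<Sum>i\<in>{i. b i * a i \<noteq> 0}. trn (b i * a i))"

definition P_inf :: "'a::{field,finite} pauli set" where
  "P_inf = {(c,a,b). c < CHAR('a) \<and> fsupp a \<and> fsupp b}"

text \<open>Z(b) X(a') = omega^{tr(b a')} X(a') Z(b).\<close>
definition pmult :: "'a::{field,finite} pauli \<Rightarrow> 'a pauli \<Rightarrow> 'a pauli" where
  "pmult x y = (case x of (c,a,b) \<Rightarrow> case y of (c',a',b') \<Rightarrow>
     ((c + c' + phase b a') mod CHAR('a), (\<lambda>i. a i + a' i), (\<lambda>i. b i + b' i)))"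

definition pone :: "'a::zero pauli" where
  "pone = (0, (\<lambda>_. 0), (\<lambda>_. 0))"

definition pinv :: "'a::{field,finite} pauli \<Rightarrow> 'a pauli" where
  "pinv x = (case x of (c,a,b) \<Rightarrow>
     ((CHAR('a) - (c + phase b (\<lambda>i. - a i)) mod CHAR('a)) mod CHAR('a),
      (\<lambda>i. - a i), (\<lambda>i. - b i)))"

inductive_set gen :: "'a::{field,finite} pauli set \<Rightarrow> 'a pauli set" for A where
  gen_one: "pone \<in> gen A"
| gen_base: "x \<in> A \<Longrightarrow> x \<in> gen A"
| gen_inv: "x \<in> gen A \<Longrightarrow> pinv x \<in> gen A"
| gen_mult: "x \<in> gen A \<Longrightarrow> y \<in> gen A \<Longrightarrow> pmult x y \<in> gen A"

definition psupp :: "'a::zero pauli \<Rightarrow> nat set" where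
  "psupp x = (case x of (c,a,b) \<Rightarrow> {i. a i \<noteq> 0 \<or> b i \<noteq> 0})"

definition pwt :: "'a::zero pauli \<Rightarrow> nat" where
  "pwt x = card (psupp x)"

text \<open>P_t viewed inside P_infinity: operators on the first N qudits (N = (t+1)n+m).\<close>
definition paulis_on :: "nat \<Rightarrow> 'a::{field,finite} pauli set" where
  "paulis_on N = {x \<in> P_inf. psupp x \<subseteq> {..<N}}"

definition center_of :: "'a::{field,finite} pauli set \<Rightarrow> 'a pauli set" where
  "center_of A = {z \<in> A. \<forall>y\<in>A. pmult z y = pmult y z}"

definition centralizer_in :: "'a::{field,finite} pauli set \<Rightarrow> 'a pauli set \<Rightarrow> 'a pauli set" where
  "centralizer_in A S = {e \<in> A. \<forall>s\<in>S. pmult e s = pmult s e}"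

definition pshift :: "nat \<Rightarrow> 'a::zero pauli \<Rightarrow> 'a pauli" where
  "pshift s x = (case x of (c,a,b) \<Rightarrow>
     (c, (\<lambda>i. if s \<le> i then a (i - s) else 0), (\<lambda>i. if s \<le> i then b (i - s) else 0)))"

text \<open>S_t (N tensor I^{tensor n} is identified with N).\<close>
primrec Stab_t :: "nat \<Rightarrow> 'a::{field,finite} pauli set \<Rightarrow> nat \<Rightarrow> 'a pauli set" where
  "Stab_t n S0 0 = S0"
| "Stab_t n S0 (Suc t) = gen (Stab_t n S0 t \<union> pshift (Suc t * n) ` S0)"

definition Stab :: "nat \<Rightarrow> 'a::{field,finite} pauli set \<Rightarrow> 'a pauli set" where
  "Stab n S0 = gen (\<Union>t. pshift (t * n) ` S0)"

text \<open>Image of a set of Pauli operators in F_q^{2N} modulo phases (S_t Z_t / Z_t).\<close>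
definition pvec :: "'a pauli \<Rightarrow> (nat \<Rightarrow> 'a) \<times> (nat \<Rightarrow> 'a)" where
  "pvec x = snd x"

text \<open>F_q-dimension of S_t Z_t / Z_t equals d: this quotient is identified with
  pvec ` S_t (kernel of pvec on P_t is Z_t); it is an F_q-space of dimension d.\<close>
definition fq_dim_eq :: "'a::{field,finite} pauli set \<Rightarrow> nat \<Rightarrow> bool" where
  "fq_dim_eq S d \<longleftrightarrow>
     (\<forall>l::'a. \<forall>v\<in>pvec ` S. (\<lambda>i. l * fst v i, \<lambda>i. l * snd v i) \<in> pvec ` S) \<and>
     card (pvec ` S) = CARD('a) ^ d"

text \<open>S_0 abelian subgroup of P_0 satisfying (S1)-(S3); its +1-eigenspace is an
  [(n,k,m)]_q convolutional stabilizer code.\<close>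
definition conv_stab_code :: "nat \<Rightarrow> nat \<Rightarrow> nat \<Rightarrow> 'a::{field,finite} pauli set \<Rightarrow> bool" where
  "conv_stab_code n k m S0 \<longleftrightarrow>
     S0 \<subseteq> paulis_on (n + m) \<and> gen S0 = S0 \<and>
     (\<forall>x\<in>S0. \<forall>y\<in>S0. pmult x y = pmult y x) \<and>
     (\<forall>t\<ge>1. \<forall>M\<in>S0. \<forall>N\<in>S0. pmult (pshift (t * n) M) N = pmult N (pshift (t * n) M)) \<and>
     (\<forall>t. fq_dim_eq (Stab_t n S0 t) ((t + 1) * (n - k))) \<and>
     (\<forall>t. Stab_t n S0 t \<inter> center_of (paulis_on ((t + 1) * n + m)) = {pone})"

definition free_dist :: "nat \<Rightarrow> 'a::{field,finite} pauli set \<Rightarrow> nat" where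
  "free_dist n S0 = Inf (pwt ` (centralizer_in P_inf (Stab n S0) -
      {pmult z s | z s. z \<in> center_of P_inf \<and> s \<in> Stab n S0}))"

definition pure_code :: "nat \<Rightarrow> 'a::{field,finite} pauli set \<Rightarrow> bool" where
  "pure_code n S0 \<longleftrightarrow>
     (\<forall>s\<in>Stab n S0. pwt s < free_dist n S0 \<longrightarrow> s \<in> center_of P_inf)"

text \<open>tau, relative to the normal basis (beta, beta^q) of F_{q^2}/F_q, F_q embedded via emb.\<close>
definition tau :: "('a \<Rightarrow> 'b::{field,finite}) \<Rightarrow> 'b \<Rightarrow> 'a::{field,finite} pauli \<Rightarrow> nat \<Rightarrow> 'b" where
  "tau emb \<beta> x i = (case x of (c,a,b) \<Rightarrow> \<beta> * emb (a i) + \<beta> ^ CARD('a) * emb (b i))"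

definition qdegree_is :: "('a \<Rightarrow> 'b::{field,finite}) \<Rightarrow> 'b \<Rightarrow> nat \<Rightarrow> 'a::{field,finite} pauli set \<Rightarrow> nat \<Rightarrow> bool" where
  "qdegree_is emb \<beta> n S0 \<delta> \<longleftrightarrow>
     (\<exists>k' \<mu>' (M :: 'b poly vec set). is_conv_code n k' \<delta> \<mu>' M \<and>
        sigma n ` M = tau emb \<beta> ` Stab n S0)"

end

theory Submission
  imports Defs "Jordan_Normal_Form.Char_Poly" "HOL-Number_Theory.Cong"
begin

text \<open>
  Since \<open>C \<subseteq> C\<^sup>\<perp>\<close>, all symplectic products of vectors of \<open>\<sigma>(C)\<close> vanish, so the operators
  \<open>X(a) Z(b)\<close> with \<open>a, b \<in> \<sigma>(C)\<close> form an abelian group with trivial phases; this is the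
  stabilizer, and \<open>S\<^sub>t\<close> consists of those with \<open>a, b\<close> among the codewords \<open>u(D) G(D)\<close> with
  \<open>deg u \<le> t\<close>, a space with \<open>q\<^bsup>(t+1)(n-k)/2\<^esup>\<close> elements. As the trace form is nondegenerate,
  \<open>X(a) Z(b)\<close> centralizes the stabilizer exactly when \<open>a, b \<in> \<sigma>(C)\<^sup>\<perp>\<close>, and it lies in it up to a
  phase exactly when \<open>a, b \<in> \<sigma>(C)\<close>; this gives the free distance \<open>wt(\<sigma>(C)\<^sup>\<perp> - \<sigma>(C))\<close> and
  purity. Finally \<open>\<tau>\<close> maps the stabilizer onto \<open>\<sigma>\<close> of the code over \<open>F\<^sub>q\<^sub>\<^sup>2\<close> generated by
  the same matrix \<open>G\<close>, whose degree is again \<open>\<delta>\<close>.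
\<close>

section \<open>Finite fields and the absolute trace\<close>

lemma CHAR_pos_finite_field: "CHAR('a::{field,finite}) > 0"
  by (rule finite_imp_CHAR_pos) simp

lemma prime_CHAR_finite_field: "prime CHAR('a::{field,finite})"
  using CHAR_pos_finite_field prime_CHAR_semidom by blast

lemma finite_field_power_CARD: "(x::'a::{field,finite}) ^ CARD('a) = x"
proof (cases "x = 0")
  case False
  have "x * (\<Prod>y\<in>UNIV-{0}. x * y) = x * x ^ (CARD('a) - 1) * \<Prod>(UNIV-{0})"
    by (simp add: prod.distrib mult_ac)
  also have "x * x ^ (CARD('a) - 1) = x ^ CARD('a)"
    using finite_UNIV_card_ge_0[where ?'a = 'a] by (simp flip: power_Suc)
  also have "(\<Prod>y\<in>UNIV-{0}. x * y) = \<Prod>(UNIV-{0})"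
    by (rule prod.reindex_bij_witness[of _ "\<lambda>y. y / x" "\<lambda>y. x * y"]) (use False in auto)
  finally show ?thesis
    by simp
qed (use finite_UNIV_card_ge_0[where ?'a = 'a] in auto)

lemma of_nat_power_CHAR:
  assumes "prime CHAR('a::comm_semiring_1)"
  shows "(of_nat j :: 'a) ^ CHAR('a) = of_nat j"
proof (induction j)
  case 0
  then show ?case
    using assms prime_gt_0_nat by (simp add: power_0_left)
next
  case (Suc j)
  have "(of_nat (Suc j) :: 'a) ^ CHAR('a) = of_nat j ^ CHAR('a) + 1 ^ CHAR('a)"
    by (simp add: add.commute freshmans_dream[OF assms])
  then show ?case
    using Suc by (simp add: add.commute)
qed

lemma of_nat_inj_below_CHAR:
  "j < CHAR('a) \<Longrightarrow> j' < CHAR('a) \<Longrightarrow> (of_nat j :: 'a::semiring_1_cancel) = of_nat j' \<Longrightarrow> j = j'"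
  by (simp add: of_nat_eq_iff_cong_CHAR cong_def)

text \<open>The \<open>p\<close> elements of the prime field are roots of \<open>X\<^sup>p - X\<close>, which has no other roots.\<close>
lemma power_CHAR_fixed_imp_of_nat:
  assumes "(y::'a::{field,finite}) ^ CHAR('a) = y"
  shows "\<exists>j<CHAR('a). y = of_nat j"
proof -
  let ?p = "CHAR('a)"
  have p2: "?p \<ge> 2"
    using prime_CHAR_finite_field[where 'a='a] prime_ge_2_nat by blast
  define P :: "'a poly" where "P = monom 1 ?p - monom 1 1"
  have "coeff P ?p = 1"
    using p2 by (simp add: P_def)
  have "card {x::'a. x ^ ?p = x} = card {x. poly P x = 0}"
    by (simp add: P_def poly_monom)
  also have "\<dots> \<le> degree P"
    using \<open>coeff P ?p = 1\<close> by (intro card_poly_roots_bound) auto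
  also have "\<dots> \<le> ?p"
    unfolding P_def using p2 by (intro degree_diff_le) (auto simp: degree_monom_eq)
  finally have "card {x::'a. x ^ ?p = x} \<le> ?p" .
  moreover have sub: "of_nat ` {..<?p} \<subseteq> {x::'a. x ^ ?p = x}"
    using of_nat_power_CHAR[OF prime_CHAR_finite_field] by auto
  moreover have "card (of_nat ` {..<?p} :: 'a set) = ?p"
    by (subst card_image) (auto intro!: inj_onI of_nat_inj_below_CHAR)
  moreover have "card (of_nat ` {..<?p} :: 'a set) \<le> card {x::'a. x ^ ?p = x}"
    using sub by (intro card_mono) auto
  ultimately have "of_nat ` {..<?p} = {x::'a. x ^ ?p = x}"
    by (intro card_subset_eq) auto
  with assms show ?thesis
    by auto
qed

lemma inverse_of_nat_eq_of_nat:
  "\<exists>m. inverse (of_nat j :: 'a::{field,finite}) = of_nat m"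
proof (cases "(of_nat j :: 'a) = 0")
  case False
  let ?p = "CHAR('a)" and ?x = "of_nat j :: 'a"
  have p2: "?p \<ge> 2"
    using prime_CHAR_finite_field[where 'a='a] prime_ge_2_nat by blast
  have "?x * ?x ^ (?p - 2) * ?x = 1 * ?x"
    using of_nat_power_CHAR[OF prime_CHAR_finite_field, of j] p2
    by (simp flip: power_Suc power_Suc2 add: Suc_diff_Suc numeral_2_eq_2)
  then have "inverse ?x = ?x ^ (?p - 2)"
    using False by (simp add: field_simps)
  then show ?thesis
    by (metis of_nat_power)
qed (auto intro: exI[of _ 0])

definition add_closed :: "'a::monoid_add set \<Rightarrow> bool" where
  "add_closed V \<longleftrightarrow> 0 \<in> V \<and> (\<forall>x\<in>V. \<forall>y\<in>V. x + y \<in> V)"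

lemma add_closed_of_nat_mult:
  "add_closed V \<Longrightarrow> x \<in> V \<Longrightarrow> (of_nat j :: 'a::semiring_1) * x \<in> V"
  by (induction j) (auto simp: add_closed_def distrib_right)

lemma add_closed_diff:
  assumes "add_closed V" "x \<in> V" "y \<in> V"
  shows "x - y \<in> (V :: 'a::{ring_1,finite} set)"
proof -
  have "CHAR('a) > 0"
    by (rule finite_imp_CHAR_pos) simp
  then have "(of_nat (CHAR('a) - 1) :: 'a) = - 1"
    by (simp add: of_nat_diff)
  then have eq: "x - y = x + of_nat (CHAR('a) - 1) * y"
    by simp
  show ?thesis
    unfolding eq using assms add_closed_of_nat_mult[OF assms(1,3)] by (simp add: add_closed_def)
qed

lemma add_closed_of_nat_mult_cancel:
  fixes y :: "'a::{field,finite}"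
  assumes "add_closed V" "of_nat d * y \<in> V" "(of_nat d :: 'a) \<noteq> 0"
  shows "y \<in> V"
proof -
  obtain m where m: "inverse (of_nat d :: 'a) = of_nat m"
    using inverse_of_nat_eq_of_nat by blast
  have "y = (inverse (of_nat d :: 'a) * of_nat d) * y"
    using assms(3) by simp
  also have "\<dots> = of_nat m * (of_nat d * y)"
    by (simp only: m mult.assoc)
  finally have y_eq: "y = of_nat m * (of_nat d * y)" .
  from add_closed_of_nat_mult[OF assms(1,2), of m] show ?thesis
    unfolding y_eq[symmetric] .
qed

lemma inj_on_add_closed_extend:
  fixes V :: "'a::{field,finite} set"
  assumes V: "add_closed V" and y: "y \<notin> V"
  shows "inj_on (\<lambda>(j, v). of_nat j * y + v) ({..<CHAR('a)} \<times> V)"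
proof -
  let ?p = "CHAR('a)"
  have ne: "of_nat j * y + v \<noteq> of_nat j' * y + v'"
    if "j' < j" "j < ?p" "v \<in> V" "v' \<in> V" for j j' v v'
  proof
    assume eq: "of_nat j * y + v = of_nat j' * y + v'"
    have "j - j' < ?p" "0 < ?p" "j - j' \<noteq> 0"
      using that by auto
    then have nz: "(of_nat (j - j') :: 'a) \<noteq> 0"
      using of_nat_inj_below_CHAR[where 'a='a, of "j - j'" 0] by (metis of_nat_0)
    have "of_nat (j - j') * y = (of_nat j * y + v) - of_nat j' * y - v"
      using that(1) by (simp add: of_nat_diff algebra_simps)
    also have "\<dots> = v' - v"
      using eq by simp
    finally have "of_nat (j - j') * y \<in> V"
      using add_closed_diff[OF V that(4,3)] by simp
    then have "y \<in> V"
      using add_closed_of_nat_mult_cancel[OF V _ nz] by blast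
    with y show False
      by simp
  qed
  show ?thesis
  proof (rule inj_onI, clarify)
    fix j v j' v'
    assume jv: "j < ?p" "v \<in> V" "j' < ?p" "v' \<in> V"
      and eq: "(of_nat j :: 'a) * y + v = of_nat j' * y + v'"
    have "\<not> j' < j"
      using ne[OF _ jv(1,2,4)] eq by blast
    moreover have "\<not> j < j'"
      using ne[OF _ jv(3,4,2)] eq by metis
    ultimately have "j = j'"
      by simp
    with eq show "j = j' \<and> v = v'"
      by simp
  qed
qed

lemma add_closed_extend:
  fixes V :: "'a::{field,finite} set"
  assumes V: "add_closed V" and y: "y \<notin> V"
  defines "V' \<equiv> (\<lambda>(j, v). of_nat j * y + v) ` ({..<CHAR('a)} \<times> V)"
  shows "add_closed V'" and "card V' = CHAR('a) * card V"
proof -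
  let ?p = "CHAR('a)" and ?f = "\<lambda>(j, v). of_nat j * y + v"
  show "card V' = ?p * card V"
    using inj_on_add_closed_extend[OF V y]
    unfolding V'_def by (simp add: card_image card_cartesian_product)
  show "add_closed V'"
    unfolding add_closed_def
  proof (intro conjI ballI)
    have "(0, 0) \<in> {..<?p} \<times> V"
      using V CHAR_pos_finite_field[where 'a='a] by (simp add: add_closed_def)
    moreover have "0 = ?f (0, 0)"
      by simp
    ultimately show "0 \<in> V'"
      unfolding V'_def by (rule rev_image_eqI)
  next
    fix x z assume "x \<in> V'" "z \<in> V'"
    then obtain j v j' v' where jv: "j < ?p" "v \<in> V" "x = of_nat j * y + v"
      and jv': "j' < ?p" "v' \<in> V" "z = of_nat j' * y + v'"
      unfolding V'_def by auto
    have mod_eq: "(of_nat ((j + j') mod ?p) :: 'a) = of_nat j + of_nat j'"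
      by (simp add: of_nat_eq_iff_cong_CHAR cong_def flip: of_nat_add)
    have "((j + j') mod ?p, v + v') \<in> {..<?p} \<times> V"
      using V jv jv' CHAR_pos_finite_field[where 'a='a] by (simp add: add_closed_def)
    moreover have "x + z = ?f ((j + j') mod ?p, v + v')"
      unfolding jv(3) jv'(3) case_prod_conv mod_eq by (simp add: algebra_simps)
    ultimately show "x + z \<in> V'"
      unfolding V'_def by (rule rev_image_eqI)
  qed
qed

text \<open>Grow an additive subgroup from \<open>{0}\<close> one element at a time; each step multiplies its size by \<open>p\<close>.\<close>
lemma card_finite_field_CHAR_power: "\<exists>e. CARD('a::{field,finite}) = CHAR('a) ^ e"
proof -
  have grow: "\<exists>e'. CARD('a) = CHAR('a) ^ e'"
    if "CARD('a) - card V = d" "add_closed V" "card V = CHAR('a) ^ e" for d e and V :: "'a set"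
    using that
  proof (induction d arbitrary: V e rule: less_induct)
    case (less d V e)
    show ?case
    proof (cases "V = UNIV")
      case False
      then obtain y where y: "y \<notin> V"
        by auto
      define V' where "V' = (\<lambda>(j, v). of_nat j * y + v) ` ({..<CHAR('a)} \<times> V)"
      have V': "add_closed V'" "card V' = CHAR('a) * card V"
        using add_closed_extend[OF less.prems(2) y] unfolding V'_def by blast+
      have "0 < card V"
        using less.prems(2) by (auto simp: add_closed_def card_gt_0_iff)
      then have "card V < card V'"
        using V'(2) prime_CHAR_finite_field[where 'a='a] prime_gt_1_nat by simp
      moreover have "card V' \<le> CARD('a)"
        by (simp add: card_mono)
      ultimately have "CARD('a) - card V' < d"
        using less.prems(1) by linarith
      moreover have "card V' = CHAR('a) ^ Suc e"
        using V'(2) less.prems(3) by simp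
      ultimately show ?thesis
        using less.IH V'(1) by blast
    qed (use less.prems in auto)
  qed
  show ?thesis
    using grow[OF refl, of "{0}" 0] by (simp add: add_closed_def)
qed

lemma CARD_eq_CHAR_power_ext_deg: "CARD('a) = CHAR('a) ^ ext_deg TYPE('a::{field,finite})"
  unfolding ext_deg_def using card_finite_field_CHAR_power[where 'a='a] by (rule LeastI_ex)

lemma ext_deg_pos: "ext_deg TYPE('a::{field,finite}) > 0"
proof (rule ccontr)
  assume "\<not> ?thesis"
  then have "CARD('a) = 1"
    using CARD_eq_CHAR_power_ext_deg[where 'a='a] by simp
  moreover have "card {0::'a, 1} \<le> CARD('a)"
    by (rule card_mono) auto
  ultimately show False
    by simp
qed

lemma tr_add: "tr ((x::'a::{field,finite}) + y) = tr x + tr y"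
  unfolding tr_def by (simp add: freshmans_dream'[OF prime_CHAR_finite_field refl] sum.distrib)

lemma tr_zero [simp]: "tr (0::'a::{field,finite}) = 0"
  unfolding tr_def using CHAR_pos_finite_field[where 'a='a] by (simp add: power_0_left)

lemma tr_sum: "tr (sum f A) = (\<Sum>i\<in>A. tr (f i :: 'a::{field,finite}))"
  by (induction A rule: infinite_finite_induct) (simp_all add: tr_add)

lemma tr_power_CHAR: "tr (x::'a::{field,finite}) ^ CHAR('a) = tr x"
proof -
  let ?p = "CHAR('a)" and ?e = "ext_deg TYPE('a)"
  define f where "f i = x ^ (?p ^ i)" for i
  obtain e' where e': "?e = Suc e'"
    using ext_deg_pos[where 'a='a] gr0_conv_Suc by blast
  have "f ?e = f 0"
    unfolding f_def using CARD_eq_CHAR_power_ext_deg[where 'a='a] finite_field_power_CARD[of x] by simp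
  have "tr x ^ ?p = (\<Sum>i<?e. f i ^ ?p)"
    unfolding tr_def f_def by (rule freshmans_dream_sum[OF prime_CHAR_finite_field refl])
  also have "\<dots> = (\<Sum>i<?e. f (Suc i))"
    by (simp add: f_def power_mult[symmetric] mult.commute)
  also have "\<dots> = (\<Sum>i<e'. f (Suc i)) + f 0"
    using \<open>f ?e = f 0\<close> by (simp add: e')
  also have "\<dots> = (\<Sum>i<?e. f i)"
    unfolding e' by (subst sum.lessThan_Suc_shift) simp
  finally show ?thesis
    by (simp add: tr_def f_def)
qed

lemma of_nat_trn: "of_nat (trn x) = tr (x::'a::{field,finite})"
proof -
  obtain j where "j < CHAR('a)" "tr x = of_nat j"
    using power_CHAR_fixed_imp_of_nat[OF tr_power_CHAR] by blast
  then have "\<exists>!j. j < CHAR('a) \<and> of_nat j = tr x"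
    using of_nat_inj_below_CHAR[where 'a='a] by metis
  then show ?thesis
    unfolding trn_def by (rule theI'[THEN conjunct2])
qed

text \<open>The trace is a polynomial function of degree \<open>p\<^sup>e\<^sup>-\<^sup>1 < q\<close>, so it cannot vanish on all of \<open>F\<^sub>q\<close>.\<close>
lemma tr_nonzero: "\<exists>z::'a::{field,finite}. tr z \<noteq> 0"
proof (rule ccontr)
  assume "\<not> ?thesis"
  then have tr_0: "tr z = 0" for z :: 'a
    by blast
  let ?p = "CHAR('a)" and ?e = "ext_deg TYPE('a)"
  have p2: "?p \<ge> 2"
    using prime_CHAR_finite_field[where 'a='a] prime_ge_2_nat by blast
  define Q :: "'a poly" where "Q = (\<Sum>i<?e. monom 1 (?p ^ i))"
  have "coeff Q (?p ^ (?e - 1)) = (\<Sum>i<?e. if i = ?e - 1 then 1 else 0)"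
    unfolding Q_def coeff_sum coeff_monom
    by (intro sum.cong refl) (use p2 power_inject_exp in auto)
  then have "Q \<noteq> 0"
    using ext_deg_pos[where 'a='a] by auto
  have "degree Q \<le> ?p ^ (?e - 1)"
    unfolding Q_def
  proof (rule degree_sum_le)
    fix i assume "i \<in> {..<?e}"
    then have "?p ^ i \<le> ?p ^ (?e - 1)"
      using p2 by (intro power_increasing) auto
    then show "degree (monom (1::'a) (?p ^ i)) \<le> ?p ^ (?e - 1)"
      using degree_monom_le order_trans by blast
  qed simp
  also have "\<dots> < CARD('a)"
    unfolding CARD_eq_CHAR_power_ext_deg[where 'a='a]
    using p2 ext_deg_pos[where 'a='a] by (intro power_strict_increasing) auto
  also have "CARD('a) = card {z. poly Q z = 0}"
    using tr_0 by (simp add: Q_def tr_def poly_sum poly_monom)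
  also have "\<dots> \<le> degree Q"
    using \<open>Q \<noteq> 0\<close> by (rule card_poly_roots_bound)
  finally show False
    by simp
qed

lemma tr_mult_eq_0_imp_eq_0:
  assumes "\<And>l. tr (l * c) = (0::'a::{field,finite})"
  shows "c = 0"
proof (rule ccontr)
  assume "c \<noteq> 0"
  obtain z :: 'a where "tr z \<noteq> 0"
    using tr_nonzero by blast
  with assms[of "z / c"] \<open>c \<noteq> 0\<close> show False
    by simp
qed

section \<open>Generalized Pauli operators\<close>

text \<open>Summing over the support of the product makes \<open>dotp\<close> symmetric and matches \<open>phase\<close>;
  when one argument is finitely supported it is the Euclidean inner product.\<close>
definition dotp :: "(nat \<Rightarrow> 'a::field) \<Rightarrow> (nat \<Rightarrow> 'a) \<Rightarrow> 'a" where
  "dotp a b = (\<Sum>i\<in>{i. a i * b i \<noteq> 0}. a i * b i)"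

lemma dotp_commute: "dotp a b = dotp b a"
  unfolding dotp_def by (simp add: mult.commute)

lemma dotp_eq_sum_supp: "fsupp a \<Longrightarrow> dotp a b = (\<Sum>i\<in>{i. a i \<noteq> 0}. a i * b i)"
  unfolding dotp_def fsupp_def by (rule sum.mono_neutral_left) auto

lemma dotp_zero [simp]: "dotp (\<lambda>_. 0) b = 0" "dotp a (\<lambda>_. 0) = 0"
  by (simp_all add: dotp_def)

lemma dotp_scale_right: "dotp a (\<lambda>i. l * b i) = l * dotp a b"
  by (cases "l = 0") (simp_all add: dotp_def sum_distrib_left mult.left_commute)

lemma edual_eq: "edual A = {v. fsupp v \<and> (\<forall>w\<in>A. dotp v w = 0)}"
  unfolding edual_def by (auto simp: dotp_eq_sum_supp)

lemma of_nat_phase: "(of_nat (phase b a) :: 'a::{field,finite}) = tr (dotp b a)"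
  by (simp add: phase_def dotp_def tr_sum of_nat_trn)

lemma phase_mod_CHAR_eq_0:
  "tr (dotp b a) = (0::'a::{field,finite}) \<Longrightarrow> phase b a mod CHAR('a) = 0"
  by (metis of_nat_phase of_nat_eq_0_iff_char_dvd dvd_eq_mod_eq_0)

lemma phase_zero [simp]: "phase (\<lambda>_. 0) a = 0" "phase b (\<lambda>_. 0) = 0"
  by (simp_all add: phase_def)

lemma pmult_commute_iff:
  "pmult ((c, a, b) :: 'a::{field,finite} pauli) (c', a', b') = pmult (c', a', b') (c, a, b) \<longleftrightarrow>
   tr (dotp b a') = tr (dotp b' a)"
proof -
  have "pmult ((c, a, b) :: 'a pauli) (c', a', b') = pmult (c', a', b') (c, a, b) \<longleftrightarrow>
     (c + c' + phase b a') mod CHAR('a) = (c + c' + phase b' a) mod CHAR('a)"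
    by (auto simp: pmult_def add.commute add.left_commute)
  also have "\<dots> \<longleftrightarrow> (of_nat (c + c' + phase b a') :: 'a) = of_nat (c + c' + phase b' a)"
    by (simp only: of_nat_eq_iff_cong_CHAR cong_def)
  also have "\<dots> \<longleftrightarrow> tr (dotp b a') = tr (dotp b' a)"
    by (simp add: of_nat_phase)
  finally show ?thesis .
qed

lemma dotp_single: "dotp b (\<lambda>j. if j = i then z else 0) = b i * z"
proof -
  have "{j. b j * (if j = i then z else 0) \<noteq> 0} \<subseteq> {i}"
    by auto
  then show ?thesis
    unfolding dotp_def by (subst sum.mono_neutral_left[of "{i}"]) auto
qed

lemma noncommuting_single_site:
  fixes a b :: "nat \<Rightarrow> 'a::{field,finite}"
  assumes "a i \<noteq> 0 \<or> b i \<noteq> 0"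
  shows "\<exists>y\<in>P_inf. psupp y \<subseteq> {i} \<and> pmult (c, a, b) y \<noteq> pmult y (c, a, b)"
proof -
  obtain z :: 'a where z: "tr z \<noteq> 0"
    using tr_nonzero by blast
  define e where "e w = (\<lambda>j. if j = i then w else (0::'a))" for w
  have e: "fsupp (e w)" "psupp (0, e w, \<lambda>_. 0) \<subseteq> {i}" "psupp (0, \<lambda>_. 0, e w) \<subseteq> {i}" for w
    by (auto simp: e_def fsupp_def psupp_def)
  have P: "(0, e w, \<lambda>_. 0) \<in> P_inf" "(0, \<lambda>_. 0, e w) \<in> P_inf" for w
    using e CHAR_pos_finite_field[where 'a='a] by (auto simp: P_inf_def fsupp_def)
  show ?thesis
  proof (cases "a i = 0")
    case False
    have "tr (dotp (e (z / a i)) a) \<noteq> 0"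
      using z False by (simp add: dotp_commute[of _ a] e_def dotp_single)
    then show ?thesis
      using P e by (intro bexI[of _ "(0, \<lambda>_. 0, e (z / a i))"]) (auto simp: pmult_commute_iff)
  next
    case True
    then have "tr (dotp b (e (z / b i))) \<noteq> 0"
      using z assms by (simp add: e_def dotp_single)
    then show ?thesis
      using P e by (intro bexI[of _ "(0, e (z / b i), \<lambda>_. 0)"]) (auto simp: pmult_commute_iff)
  qed
qed

lemma center_P_inf:
  "center_of (P_inf :: 'a::{field,finite} pauli set) = {(c, \<lambda>_. 0, \<lambda>_. 0) | c. c < CHAR('a)}"
proof (intro equalityI subsetI)
  fix x :: "'a pauli" assume x: "x \<in> center_of P_inf"
  obtain c a b where xe: "x = (c, a, b)"
    by (cases x) auto
  have "a i = 0 \<and> b i = 0" for i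
    using noncommuting_single_site[of a i b c] x xe unfolding center_of_def by auto
  then show "x \<in> {(c, \<lambda>_. 0, \<lambda>_. 0) | c. c < CHAR('a)}"
    using x xe by (auto simp: center_of_def P_inf_def)
qed (auto simp: center_of_def P_inf_def fsupp_def pmult_commute_iff)

lemma center_paulis_onD:
  assumes "x \<in> center_of (paulis_on N :: 'a::{field,finite} pauli set)"
  shows "\<exists>c. x = (c, \<lambda>_. 0, \<lambda>_. 0)"
proof -
  obtain c a b where xe: "x = (c, a, b)"
    by (cases x) auto
  have "a i = 0 \<and> b i = 0" for i
  proof (rule ccontr)
    assume "\<not> (a i = 0 \<and> b i = 0)"
    then obtain y where y: "y \<in> P_inf" "psupp y \<subseteq> {i}" "pmult (c, a, b) y \<noteq> pmult y (c, a, b)"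
      using noncommuting_single_site[of a i b c] by auto
    have "i \<in> psupp x"
      using \<open>\<not> (a i = 0 \<and> b i = 0)\<close> by (auto simp: xe psupp_def)
    then have "y \<in> paulis_on N"
      using assms y by (auto simp: center_of_def paulis_on_def)
    then show False
      using assms xe y by (auto simp: center_of_def)
  qed
  then show ?thesis
    using xe by auto
qed

lemma gen_least:
  assumes "A \<subseteq> T" "pone \<in> T" "\<And>x. x \<in> T \<Longrightarrow> pinv x \<in> T"
    "\<And>x y. x \<in> T \<Longrightarrow> y \<in> T \<Longrightarrow> pmult x y \<in> T"
  shows "gen A \<subseteq> T"
proof
  fix x assume "x \<in> gen A"
  then show "x \<in> T"
    by (induction x rule: gen.induct) (use assms in auto)
qed

lemma gen_subset_gen: "A \<subseteq> gen B \<Longrightarrow> gen A \<subseteq> gen B"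
  by (rule gen_least) (auto intro: gen.intros)

lemma subset_gen: "A \<subseteq> gen A"
  by (auto intro: gen.intros)

lemma seq_wt_le_pwt:
  assumes "fsupp a" "fsupp b"
  shows "seq_wt a \<le> pwt (c, a, b)" "seq_wt b \<le> pwt (c, a, b)"
proof -
  have "psupp (c, a, b) = {i. a i \<noteq> 0} \<union> {i. b i \<noteq> 0}"
    by (auto simp: psupp_def)
  then have "finite (psupp (c, a, b))"
    using assms by (simp add: fsupp_def)
  then show "seq_wt a \<le> pwt (c, a, b)" "seq_wt b \<le> pwt (c, a, b)"
    unfolding seq_wt_def pwt_def by (auto simp: psupp_def intro!: card_mono)
qed

lemma Inf_nat_eq_if_dominated:
  fixes A B :: "nat set"
  assumes "B \<subseteq> A" "\<And>x. x \<in> A \<Longrightarrow> \<exists>y\<in>B. y \<le> x"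
  shows "Inf A = Inf B"
proof (cases "A = {}")
  case False
  then obtain y where y: "y \<in> B" "y \<le> Inf A"
    using assms(2) Inf_nat_def1 by blast
  then have "Inf B \<le> Inf A"
    using cInf_lower[of y B] by simp
  moreover have "Inf A \<le> Inf B"
    using y assms(1) by (intro cInf_superset_mono) auto
  ultimately show ?thesis
    by simp
qed (use assms in auto)

section \<open>The stabilizer of a self-orthogonal filtration\<close>

definition seq_shift :: "nat \<Rightarrow> (nat \<Rightarrow> 'a::zero) \<Rightarrow> nat \<Rightarrow> 'a" where
  "seq_shift s a = (\<lambda>i. if s \<le> i then a (i - s) else 0)"

lemma pshift_eq: "pshift s (c, a, b) = (c, seq_shift s a, seq_shift s b)"
  by (simp add: pshift_def seq_shift_def)

lemma pshift_0: "pshift 0 x = x"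
  by (cases x) (simp add: pshift_def)

lemma seq_shift_zero [simp]: "seq_shift s (\<lambda>_. 0) = (\<lambda>_. 0)"
  by (simp add: seq_shift_def)

lemma seq_shift_0 [simp]: "seq_shift 0 a = a"
  by (simp add: seq_shift_def)

definition xz_group :: "(nat \<Rightarrow> 'a::zero) set \<Rightarrow> 'a pauli set" where
  "xz_group V = {(0, a, b) | a b. a \<in> V \<and> b \<in> V}"

lemma pvec_xz_group: "pvec ` xz_group V = V \<times> V"
  unfolding xz_group_def pvec_def by (auto simp: image_iff)

lemma pone_in_center_paulis_on: "pone \<in> center_of (paulis_on N :: 'a::{field,finite} pauli set)"
proof -
  have "pone \<in> (P_inf :: 'a pauli set)"
    using CHAR_pos_finite_field[where 'a='a] by (simp add: pone_def P_inf_def fsupp_def)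
  moreover have "pmult pone y = pmult y (pone :: 'a pauli)" for y
    by (cases y) (simp add: pone_def pmult_commute_iff)
  ultimately show ?thesis
    by (auto simp: center_of_def paulis_on_def pone_def psupp_def)
qed

lemma xz_group_inter_center:
  assumes "(\<lambda>_. 0) \<in> V"
  shows "xz_group V \<inter> center_of (paulis_on N :: 'a::{field,finite} pauli set) = {pone}"
proof
  show "xz_group V \<inter> center_of (paulis_on N) \<subseteq> {pone}"
    using center_paulis_onD by (fastforce simp: xz_group_def pone_def)
  show "{pone} \<subseteq> xz_group V \<inter> center_of (paulis_on N)"
    using assms pone_in_center_paulis_on by (auto simp: xz_group_def pone_def)
qed

text \<open>\<open>W t\<close> models the codewords of a convolutional code generated by inputs of degree at
  most \<open>t\<close>; they live on the first \<open>(t + 1) n + m\<close> positions, and their union \<open>L\<close> is self-orthogonal.\<close>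
locale selforthogonal_filtration =
  fixes n m k' :: nat and L :: "(nat \<Rightarrow> 'a::{field,finite}) set" and W :: "nat \<Rightarrow> (nat \<Rightarrow> 'a) set"
  assumes W_zero: "(\<lambda>_. 0) \<in> W t"
    and W_add: "x \<in> W t \<Longrightarrow> y \<in> W t \<Longrightarrow> (\<lambda>i. x i + y i) \<in> W t"
    and W_scale: "x \<in> W t \<Longrightarrow> (\<lambda>i. l * x i) \<in> W t"
    and W_Suc: "W (Suc t) = {\<lambda>i. x i + seq_shift (Suc t * n) y i | x y. x \<in> W t \<and> y \<in> W 0}"
    and W_supp: "x \<in> W t \<Longrightarrow> x i \<noteq> 0 \<Longrightarrow> i < (t + 1) * n + m"
    and W_card: "card (W t) = CARD('a) ^ ((t + 1) * k')"
    and L_eq: "L = (\<Union>t. W t)"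
    and L_orth: "v \<in> L \<Longrightarrow> w \<in> L \<Longrightarrow> dotp v w = 0"
begin

lemma W_fsupp: "x \<in> W t \<Longrightarrow> fsupp x"
  unfolding fsupp_def by (rule finite_subset[of _ "{..<(t + 1) * n + m}"]) (auto dest: W_supp)

lemma W_neg: "x \<in> W t \<Longrightarrow> (\<lambda>i. - x i) \<in> W t"
  using W_scale[of x t "-1"] by simp

lemma seq_shift_W: "y \<in> W 0 \<Longrightarrow> seq_shift (t * n) y \<in> W t"
proof (cases t)
  case (Suc t')
  assume "y \<in> W 0"
  then have "(\<lambda>i. (\<lambda>_. 0) i + seq_shift (Suc t' * n) y i) \<in> W (Suc t')"
    unfolding W_Suc by (intro CollectI exI[of _ "\<lambda>_. 0"] exI[of _ y]) (simp add: W_zero)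
  then show ?thesis
    using Suc by simp
qed simp

lemma W_mono: "t \<le> t' \<Longrightarrow> W t \<subseteq> W t'"
proof (induction t' rule: dec_induct)
  case (step t')
  have "x \<in> W (Suc t')" if "x \<in> W t'" for x
  proof -
    have "(\<lambda>i. x i + seq_shift (Suc t' * n) (\<lambda>_. 0) i) \<in> W (Suc t')"
      unfolding W_Suc by (intro CollectI exI[of _ x] exI[of _ "\<lambda>_. 0"]) (simp add: W_zero that)
    then show ?thesis
      by simp
  qed
  with step show ?case
    by blast
qed simp

lemma W_subset_L: "W t \<subseteq> L"
  unfolding L_eq by auto

lemma L_fsupp: "x \<in> L \<Longrightarrow> fsupp x"
  unfolding L_eq using W_fsupp by auto

lemma L_zero: "(\<lambda>_. 0) \<in> L"
  using W_zero W_subset_L by blast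

lemma L_add: "x \<in> L \<Longrightarrow> y \<in> L \<Longrightarrow> (\<lambda>i. x i + y i) \<in> L"
proof -
  assume "x \<in> L" "y \<in> L"
  then obtain t t' where "x \<in> W t" "y \<in> W t'"
    unfolding L_eq by auto
  then have "x \<in> W (max t t')" "y \<in> W (max t t')"
    using W_mono[of t "max t t'"] W_mono[of t' "max t t'"] by auto
  then show ?thesis
    using W_add W_subset_L by blast
qed

lemma L_scale: "x \<in> L \<Longrightarrow> (\<lambda>i. l * x i) \<in> L"
  unfolding L_eq using W_scale by blast

lemma L_neg: "x \<in> L \<Longrightarrow> (\<lambda>i. - x i) \<in> L"
  unfolding L_eq using W_neg by blast

lemma L_subset_edual: "L \<subseteq> edual L"
  unfolding edual_eq using L_orth L_fsupp by auto

lemma pmult_xz: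
  assumes "b \<in> L" "a' \<in> L"
  shows "pmult (0, a, b) (0, a', b') = (0, \<lambda>i. a i + a' i, \<lambda>i. b i + b' i)"
  using phase_mod_CHAR_eq_0[of b a'] L_orth[OF assms] by (simp add: pmult_def)

lemma pinv_xz:
  assumes "a \<in> L" "b \<in> L"
  shows "pinv (0, a, b) = (0, \<lambda>i. - a i, \<lambda>i. - b i)"
  using phase_mod_CHAR_eq_0[of b "\<lambda>i. - a i"] L_orth[OF assms(2) L_neg[OF assms(1)]]
  by (simp add: pinv_def)

lemma xz_commute:
  assumes "x \<in> xz_group L" "y \<in> xz_group L"
  shows "pmult x y = pmult y x"
  using assms by (auto simp: xz_group_def pmult_xz add.commute)

lemma gen_xz_subset:
  assumes "V \<subseteq> L" "(\<lambda>_. 0) \<in> V" "\<And>x y. x \<in> V \<Longrightarrow> y \<in> V \<Longrightarrow> (\<lambda>i. x i + y i) \<in> V"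
    "\<And>x. x \<in> V \<Longrightarrow> (\<lambda>i. - x i) \<in> V" "A \<subseteq> xz_group V"
  shows "gen A \<subseteq> xz_group V"
proof (rule gen_least[OF assms(5)])
  show "pone \<in> xz_group V"
    using assms(2) by (auto simp: xz_group_def pone_def)
  show "pinv x \<in> xz_group V" if x: "x \<in> xz_group V" for x
  proof -
    obtain a b where "x = (0, a, b)" "a \<in> V" "b \<in> V"
      using x by (auto simp: xz_group_def)
    moreover have "a \<in> L" "b \<in> L"
      using assms(1) calculation by auto
    ultimately show ?thesis
      using assms(4) by (auto simp: xz_group_def pinv_xz)
  qed
  show "pmult x y \<in> xz_group V" if xy: "x \<in> xz_group V" "y \<in> xz_group V" for x y
  proof -
    obtain a b a' b' where "x = (0, a, b)" "y = (0, a', b')" "a \<in> V" "b \<in> V" "a' \<in> V" "b' \<in> V"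
      using xy by (auto simp: xz_group_def)
    moreover have "b \<in> L" "a' \<in> L"
      using assms(1) calculation by auto
    ultimately show ?thesis
      using assms(3) by (auto simp: xz_group_def pmult_xz)
  qed
qed

lemma gen_xz_W: "A \<subseteq> xz_group (W t) \<Longrightarrow> gen A \<subseteq> xz_group (W t)"
  by (rule gen_xz_subset) (use W_subset_L W_zero W_add W_neg in auto)

lemma gen_xz_L: "A \<subseteq> xz_group L \<Longrightarrow> gen A \<subseteq> xz_group L"
  by (rule gen_xz_subset) (use L_zero L_add L_neg in auto)


lemma seq_shift_L: "y \<in> W 0 \<Longrightarrow> seq_shift (t * n) y \<in> L"
  using seq_shift_W W_subset_L by blast

abbreviation S0 :: "'a pauli set" where
  "S0 \<equiv> xz_group (W 0)"

lemma Stab_t_Suc_generators: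
  "gen (xz_group (W t) \<union> pshift (Suc t * n) ` S0) = xz_group (W (Suc t))"
proof
  show "gen (xz_group (W t) \<union> pshift (Suc t * n) ` S0) \<subseteq> xz_group (W (Suc t))"
  proof (rule gen_xz_W, intro Un_least subsetI)
    fix x assume "x \<in> xz_group (W t)"
    then show "x \<in> xz_group (W (Suc t))"
      using W_mono[of t "Suc t"] unfolding xz_group_def by auto
  next
    fix x assume "x \<in> pshift (Suc t * n) ` S0"
    then obtain a b where "x = (0, seq_shift (Suc t * n) a, seq_shift (Suc t * n) b)" "a \<in> W 0" "b \<in> W 0"
      by (auto simp: xz_group_def pshift_eq)
    then show "x \<in> xz_group (W (Suc t))"
      using seq_shift_W[of a "Suc t"] seq_shift_W[of b "Suc t"] by (simp add: xz_group_def)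
  qed
next
  let ?s = "seq_shift (Suc t * n)"
  show "xz_group (W (Suc t)) \<subseteq> gen (xz_group (W t) \<union> pshift (Suc t * n) ` S0)"
  proof
    fix z assume "z \<in> xz_group (W (Suc t))"
    then obtain x y x' y' where z: "z = (0, \<lambda>i. x i + ?s y i, \<lambda>i. x' i + ?s y' i)"
      and W: "x \<in> W t" "y \<in> W 0" "x' \<in> W t" "y' \<in> W 0"
      unfolding xz_group_def W_Suc by blast
    have "x' \<in> L" "?s y \<in> L"
      using W W_subset_L seq_shift_W[of y "Suc t"] by auto
    then have "z = pmult (0, x, x') (0, ?s y, ?s y')"
      by (simp only: z pmult_xz)
    moreover have "(0, x, x') \<in> xz_group (W t)"
      using W by (auto simp: xz_group_def)
    moreover have "(0, ?s y, ?s y') \<in> pshift (Suc t * n) ` S0"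
      using W by (intro image_eqI[of _ _ "(0, y, y')"]) (auto simp: xz_group_def pshift_eq)
    ultimately show "z \<in> gen (xz_group (W t) \<union> pshift (Suc t * n) ` S0)"
      by (auto intro: gen.intros)
  qed
qed

lemma Stab_t_eq: "Stab_t n S0 t = xz_group (W t)"
  by (induction t) (simp_all only: Stab_t.simps Stab_t_Suc_generators)

lemma pshift_S0_subset_Stab: "pshift (t * n) ` S0 \<subseteq> Stab n S0"
proof -
  have "pshift (t * n) ` S0 \<subseteq> (\<Union>t. pshift (t * n) ` S0)"
    by (rule UN_upper) (rule UNIV_I)
  also have "\<dots> \<subseteq> Stab n S0"
    unfolding Stab_def by (rule subset_gen)
  finally show ?thesis .
qed

lemma Stab_t_subset_Stab: "Stab_t n S0 t \<subseteq> Stab n S0"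
proof (induction t)
  case 0
  then show ?case
    using pshift_S0_subset_Stab[of 0] by (simp add: pshift_0)
next
  case (Suc t)
  then have "Stab_t n S0 t \<union> pshift (Suc t * n) ` S0 \<subseteq> Stab n S0"
    using pshift_S0_subset_Stab by (intro Un_least)
  then show ?case
    unfolding Stab_def by (simp only: Stab_t.simps gen_subset_gen)
qed

lemma Stab_eq: "Stab n S0 = xz_group L"
proof
  show "Stab n S0 \<subseteq> xz_group L"
    unfolding Stab_def
  proof (rule gen_xz_L, rule subsetI)
    fix z assume "z \<in> (\<Union>t. pshift (t * n) ` S0)"
    then show "z \<in> xz_group L"
      by (auto simp: pshift_eq xz_group_def intro: seq_shift_L)
  qed
next
  show "xz_group L \<subseteq> Stab n S0"
  proof
    fix z assume "z \<in> xz_group L"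
    then obtain a b t t' where z: "z = (0, a, b)" "a \<in> W t" "b \<in> W t'"
      unfolding xz_group_def L_eq by auto
    then have "z \<in> xz_group (W (max t t'))"
      using W_mono[of t "max t t'"] W_mono[of t' "max t t'"] by (auto simp: xz_group_def)
    then show "z \<in> Stab n S0"
      using Stab_t_subset_Stab Stab_t_eq by blast
  qed
qed

lemma xz_W_subset_paulis_on: "xz_group (W t) \<subseteq> paulis_on ((t + 1) * n + m)"
  using W_supp W_fsupp CHAR_pos_finite_field[where 'a='a]
  by (fastforce simp: xz_group_def paulis_on_def P_inf_def psupp_def)

lemma fq_dim_eq_xz_W: "fq_dim_eq (xz_group (W t)) ((t + 1) * (2 * k'))"
  unfolding fq_dim_eq_def pvec_xz_group
proof (intro conjI allI ballI)
  fix l :: 'a and v assume "v \<in> W t \<times> W t"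
  then show "(\<lambda>i. l * fst v i, \<lambda>i. l * snd v i) \<in> W t \<times> W t"
    using W_scale by auto
next
  have "(t + 1) * (2 * k') = (t + 1) * k' + (t + 1) * k'"
    by simp
  then show "card (W t \<times> W t) = CARD('a) ^ ((t + 1) * (2 * k'))"
    by (simp only: card_cartesian_product W_card power_add)
qed

lemma conv_stab_code_xz:
  assumes "n - k = 2 * k'"
  shows "conv_stab_code n k m S0"
  unfolding conv_stab_code_def
proof (intro conjI allI impI ballI)
  show "S0 \<subseteq> paulis_on (n + m)"
    using xz_W_subset_paulis_on[of 0] by simp
  show "gen S0 = S0"
    using gen_xz_W[OF subset_refl] subset_gen by blast
  show "pmult x y = pmult y x" if "x \<in> S0" "y \<in> S0" for x y
    using that xz_commute W_subset_L unfolding xz_group_def by blast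
  show "pmult (pshift (t * n) M) N = pmult N (pshift (t * n) M)" if "M \<in> S0" "N \<in> S0" for t M N
  proof (rule xz_commute)
    show "pshift (t * n) M \<in> xz_group L"
      using that by (auto simp: pshift_eq xz_group_def intro: seq_shift_L)
    show "N \<in> xz_group L"
      using that W_subset_L unfolding xz_group_def by blast
  qed
  show "fq_dim_eq (Stab_t n S0 t) ((t + 1) * (n - k))" for t
    unfolding Stab_t_eq assms by (rule fq_dim_eq_xz_W)
  show "Stab_t n S0 t \<inter> center_of (paulis_on ((t + 1) * n + m)) = {pone}" for t
    unfolding Stab_t_eq using W_zero by (rule xz_group_inter_center)
qed

lemma center_times_Stab:
  "{pmult z s | z s. z \<in> center_of P_inf \<and> s \<in> Stab n S0} =
   {(c, a, b) | c a b. c < CHAR('a) \<and> a \<in> L \<and> b \<in> L}"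
  (is "?ZS = ?R")
proof (intro equalityI subsetI)
  fix x assume "x \<in> ?ZS"
  then obtain c a b where "c < CHAR('a)" "a \<in> L" "b \<in> L" "x = pmult (c, \<lambda>_. 0, \<lambda>_. 0) (0, a, b)"
    unfolding Stab_eq center_P_inf by (auto simp: xz_group_def)
  then show "x \<in> ?R"
    by (simp add: pmult_def)
next
  fix x assume "x \<in> ?R"
  then obtain c a b where x: "x = (c, a, b)" "c < CHAR('a)" "a \<in> L" "b \<in> L"
    by auto
  then have "x = pmult (c, \<lambda>_. 0, \<lambda>_. 0) (0, a, b)"
    by (simp add: pmult_def)
  moreover have "(c, \<lambda>_. 0, \<lambda>_. 0) \<in> (center_of P_inf :: 'a pauli set)" "(0, a, b) \<in> Stab n S0"
    using x unfolding Stab_eq center_P_inf by (auto simp: xz_group_def)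
  ultimately show "x \<in> ?ZS"
    by blast
qed

lemma centralizer_Stab:
  "centralizer_in P_inf (Stab n S0) = {(c, a, b) | c a b. c < CHAR('a) \<and> a \<in> edual L \<and> b \<in> edual L}"
proof (intro equalityI subsetI)
  fix x assume x: "x \<in> centralizer_in P_inf (Stab n S0)"
  then obtain c a b where xe: "x = (c, a, b)" "c < CHAR('a)" "fsupp a" "fsupp b"
    unfolding centralizer_in_def P_inf_def by auto
  have comm: "tr (dotp b a') = tr (dotp b' a)" if "a' \<in> L" "b' \<in> L" for a' b'
  proof -
    have "(0, a', b') \<in> Stab n S0"
      using that unfolding Stab_eq by (auto simp: xz_group_def)
    then have "pmult (c, a, b) (0, a', b') = pmult (0, a', b') (c, a, b)"
      using x xe(1) by (auto simp: centralizer_in_def)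
    then show ?thesis
      by (simp add: pmult_commute_iff)
  qed
  have "dotp a w = 0" if "w \<in> L" for w
  proof (rule tr_mult_eq_0_imp_eq_0)
    show "tr (l * dotp a w) = 0" for l
      using comm[OF L_zero L_scale[OF that], of l, symmetric]
      by (simp only: dotp_commute[of _ a] dotp_scale_right dotp_zero tr_zero)
  qed
  moreover have "dotp b w = 0" if "w \<in> L" for w
  proof (rule tr_mult_eq_0_imp_eq_0)
    show "tr (l * dotp b w) = 0" for l
      using comm[OF L_scale[OF that] L_zero, of l]
      by (simp only: dotp_scale_right dotp_zero tr_zero)
  qed
  ultimately show "x \<in> {(c, a, b) | c a b. c < CHAR('a) \<and> a \<in> edual L \<and> b \<in> edual L}"
    using xe by (auto simp: edual_eq)
next
  fix x assume "x \<in> {(c, a, b) | c a b. c < CHAR('a) \<and> a \<in> edual L \<and> b \<in> edual L}"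
  then obtain c a b where xe: "x = (c, a, b)" "c < CHAR('a)" "fsupp a" "fsupp b"
    "\<And>w. w \<in> L \<Longrightarrow> dotp a w = 0" "\<And>w. w \<in> L \<Longrightarrow> dotp b w = 0"
    by (auto simp: edual_eq)
  then have "pmult x s = pmult s x" if "s \<in> xz_group L" for s
    using that by (auto simp: xz_group_def pmult_commute_iff dotp_commute[of _ a])
  then show "x \<in> centralizer_in P_inf (Stab n S0)"
    using xe unfolding Stab_eq by (auto simp: centralizer_in_def P_inf_def)
qed

lemma free_dist_xz: "free_dist n S0 = wt_set (edual L - L)"
  unfolding free_dist_def wt_set_def centralizer_Stab center_times_Stab
proof (rule Inf_nat_eq_if_dominated)
  let ?X = "{(c, a, b) | c a b. c < CHAR('a) \<and> a \<in> edual L \<and> b \<in> edual L} -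
    {(c, a, b) | c a b. c < CHAR('a) \<and> a \<in> L \<and> b \<in> L}"
  show "{seq_wt v | v. v \<in> edual L - L \<and> v \<noteq> (\<lambda>_. 0)} \<subseteq> pwt ` ?X"
  proof
    fix y assume "y \<in> {seq_wt v | v. v \<in> edual L - L \<and> v \<noteq> (\<lambda>_. 0)}"
    then obtain v where v: "y = seq_wt v" "v \<in> edual L" "v \<notin> L"
      by auto
    have "(0, v, \<lambda>_. 0) \<in> ?X"
      using v CHAR_pos_finite_field[where 'a='a] by (auto simp: edual_eq fsupp_def)
    moreover have "pwt (0, v, \<lambda>_. 0) = y"
      by (simp add: v pwt_def psupp_def seq_wt_def)
    ultimately show "y \<in> pwt ` ?X"
      by force
  qed
  fix y assume "y \<in> pwt ` ?X"
  then obtain c a b where x: "y = pwt (c, a, b)" "a \<in> edual L" "b \<in> edual L" "a \<notin> L \<or> b \<notin> L"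
    by blast
  have "fsupp a" "fsupp b"
    using x by (auto simp: edual_eq)
  note wt = seq_wt_le_pwt[OF this, of c]
  show "\<exists>z\<in>{seq_wt v | v. v \<in> edual L - L \<and> v \<noteq> (\<lambda>_. 0)}. z \<le> y"
    using x wt L_zero by (cases "a \<in> L") fastforce+
qed

lemma pure_xz:
  assumes "wt_set (edual L - L) = wt_set (edual L)"
  shows "pure_code n S0"
  unfolding pure_code_def
proof (intro ballI impI)
  fix s assume s: "s \<in> Stab n S0" "pwt s < free_dist n S0"
  then obtain a b where se: "s = (0, a, b)" "a \<in> L" "b \<in> L"
    unfolding Stab_eq by (auto simp: xz_group_def)
  have lt: "pwt s < wt_set (edual L)"
    using s assms free_dist_xz by simp
  have "v = (\<lambda>_. 0)" if "v \<in> L" "seq_wt v \<le> pwt s" for v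
  proof (rule ccontr)
    assume "v \<noteq> (\<lambda>_. 0)"
    then have "wt_set (edual L) \<le> seq_wt v"
      unfolding wt_set_def using that L_subset_edual by (intro cInf_lower) auto
    then show False
      using that lt by simp
  qed
  then have "a = (\<lambda>_. 0)" "b = (\<lambda>_. 0)"
    using se seq_wt_le_pwt[OF L_fsupp L_fsupp, of a b 0] by auto
  then show "s \<in> center_of P_inf"
    using se CHAR_pos_finite_field[where 'a='a] by (simp add: center_P_inf)
qed

end

section \<open>Polynomial encoders\<close>

lemma sigma_add:
  assumes "0 < n" "u \<in> carrier_vec n" "v \<in> carrier_vec n"
  shows "sigma n (u + v) = (\<lambda>j. sigma n u j + sigma n v j)"
  using assms by (simp add: sigma_def fun_eq_iff)

lemma sigma_smult_const:
  fixes u :: "'a::comm_semiring_1 poly vec"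
  assumes "0 < n" "u \<in> carrier_vec n"
  shows "sigma n ([:l:] \<cdot>\<^sub>v u) = (\<lambda>j. l * sigma n u j)"
  using assms by (simp add: sigma_def fun_eq_iff)

lemma sigma_map_poly:
  assumes "0 < n" "u \<in> carrier_vec n" "f 0 = 0"
  shows "sigma n (map_vec (map_poly f) u) = (\<lambda>j. f (sigma n u j))"
  using assms by (simp add: sigma_def fun_eq_iff coeff_map_poly)

lemma sigma_monom_mult:
  fixes u :: "'a::comm_semiring_1 poly vec"
  assumes n: "0 < n" and u: "u \<in> carrier_vec n"
  shows "sigma n (monom 1 s \<cdot>\<^sub>v u) = seq_shift (s * n) (sigma n u)"
proof
  fix j
  have "sigma n (monom 1 s \<cdot>\<^sub>v u) j = (if j div n < s then 0 else coeff (u $ (j mod n)) (j div n - s))"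
    using n u by (simp add: sigma_def coeff_monom_mult)
  also have "\<dots> = seq_shift (s * n) (sigma n u) j"
  proof (cases "s * n \<le> j")
    case True
    then obtain r where j: "j = s * n + r"
      using le_Suc_ex by blast
    have "j div n = s + r div n" "j mod n = r mod n"
      using n by (simp_all add: j)
    then show ?thesis
      using True by (simp add: seq_shift_def sigma_def j)
  next
    case False
    then have "j div n < s"
      using n by (metis div_less_iff_less_mult linorder_not_le)
    then show ?thesis
      using False by (simp add: seq_shift_def)
  qed
  finally show "sigma n (monom 1 s \<cdot>\<^sub>v u) j = seq_shift (s * n) (sigma n u) j" .
qed

lemma sigma_inj_on:
  assumes "0 < n"
  shows "inj_on (sigma n) (carrier_vec n)"
proof (rule inj_onI)
  fix u v :: "'a poly vec"
  assume uv: "u \<in> carrier_vec n" "v \<in> carrier_vec n" and eq: "sigma n u = sigma n v"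
  show "u = v"
  proof (rule eq_vecI)
    fix r assume "r < dim_vec v"
    then have r: "r < n"
      using uv by simp
    show "u $ r = v $ r"
    proof (rule poly_eqI)
      fix d
      show "coeff (u $ r) d = coeff (v $ r) d"
        using fun_cong[OF eq, of "d * n + r"] r by (simp add: sigma_def)
    qed
  qed (use uv in simp)
qed

lemma sigma_nonzero_less:
  assumes "0 < n" "u \<in> carrier_vec n" "\<And>r. r < n \<Longrightarrow> degree (u $ r) \<le> d" "sigma n u j \<noteq> 0"
  shows "j < (d + 1) * n"
proof -
  have "j div n \<le> degree (u $ (j mod n))"
    using assms(4) by (simp add: sigma_def le_degree)
  also have "\<dots> \<le> d"
    using assms(1,3) by simp
  finally have "j div n < d + 1"
    by simp
  then show ?thesis
    using assms(1) by (metis div_less_iff_less_mult mult.commute)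
qed

lemma mult_mat_vec_smult_commute:
  assumes "A \<in> carrier_mat nr nc" "v \<in> carrier_vec nc"
  shows "A *\<^sub>v (a \<cdot>\<^sub>v v) = a \<cdot>\<^sub>v (A *\<^sub>v (v :: 'a::comm_semiring_0 vec))"
  using assms by (intro eq_vecI) (auto simp: scalar_prod_def sum_distrib_left mult.left_commute)

definition deg_le_vecs :: "nat \<Rightarrow> nat \<Rightarrow> 'a::zero poly vec set" where
  "deg_le_vecs k t = {u \<in> carrier_vec k. \<forall>i<k. degree (u $ i) \<le> t}"

definition vec_of_coeffs :: "nat \<Rightarrow> nat \<Rightarrow> (nat \<times> nat \<Rightarrow> 'a::comm_monoid_add) \<Rightarrow> 'a poly vec" where
  "vec_of_coeffs k t f = vec k (\<lambda>i. \<Sum>d\<le>t. monom (f (i, d)) d)"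

lemma coeff_vec_of_coeffs:
  "i < k \<Longrightarrow> coeff (vec_of_coeffs k t f $ i) d = (if d \<le> t then f (i, d) else 0)"
  by (simp add: vec_of_coeffs_def coeff_sum)

lemma bij_betw_vec_of_coeffs:
  "bij_betw (vec_of_coeffs k t) ({..<k} \<times> {..t} \<rightarrow>\<^sub>E UNIV) (deg_le_vecs k t :: 'a::comm_monoid_add poly vec set)"
proof (rule bij_betw_byWitness[where f' = "\<lambda>u. restrict (\<lambda>(i, d). coeff (u $ i) d) ({..<k} \<times> {..t})"])
  let ?I = "{..<k} \<times> {..t}" and ?F = "vec_of_coeffs k t :: _ \<Rightarrow> 'a poly vec"
  show "\<forall>f\<in>?I \<rightarrow>\<^sub>E UNIV. restrict (\<lambda>(i, d). coeff (?F f $ i) d) ?I = f"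
  proof (intro ballI ext)
    fix f x assume f: "f \<in> ?I \<rightarrow>\<^sub>E (UNIV :: 'a set)"
    show "restrict (\<lambda>(i, d). coeff (?F f $ i) d) ?I x = f x"
    proof (cases "x \<in> ?I")
      case True
      then obtain i d where "x = (i, d)" "i < k" "d \<le> t"
        by auto
      then show ?thesis
        by (simp add: coeff_vec_of_coeffs)
    next
      case False
      then show ?thesis
        using PiE_arb[OF f False] by simp
    qed
  qed
  show "\<forall>u\<in>deg_le_vecs k t. ?F (restrict (\<lambda>(i, d). coeff (u $ i) d) ?I) = u"
  proof
    fix u :: "'a poly vec" assume "u \<in> deg_le_vecs k t"
    then have u: "u \<in> carrier_vec k" and deg: "\<And>i. i < k \<Longrightarrow> degree (u $ i) \<le> t"
      by (auto simp: deg_le_vecs_def)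
    show "?F (restrict (\<lambda>(i, d). coeff (u $ i) d) ?I) = u"
    proof (rule eq_vecI)
      fix i assume "i < dim_vec u"
      then have i: "i < k"
        using u by simp
      show "?F (restrict (\<lambda>(i, d). coeff (u $ i) d) ?I) $ i = u $ i"
        using i deg[OF i] by (intro poly_eqI) (simp add: coeff_vec_of_coeffs coeff_eq_0)
    qed (use u in \<open>simp add: vec_of_coeffs_def\<close>)
  qed
  show "?F ` (?I \<rightarrow>\<^sub>E UNIV) \<subseteq> deg_le_vecs k t"
  proof (rule image_subsetI)
    fix f :: "nat \<times> nat \<Rightarrow> 'a"
    have "degree (?F f $ i) \<le> t" if "i < k" for i
      by (rule degree_le) (simp add: coeff_vec_of_coeffs[OF that])
    then show "?F f \<in> deg_le_vecs k t"
      by (simp add: deg_le_vecs_def vec_of_coeffs_def)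
  qed
  show "(\<lambda>u. restrict (\<lambda>(i, d). coeff (u $ i) d) ?I) ` deg_le_vecs k t \<subseteq> ?I \<rightarrow>\<^sub>E UNIV"
    by (simp add: image_subset_iff)
qed

lemma card_deg_le_vecs:
  "card (deg_le_vecs k t :: 'a::{comm_monoid_add,finite} poly vec set) = CARD('a) ^ (k * (t + 1))"
proof -
  have "card ({..<k} \<times> {..t} \<rightarrow>\<^sub>E (UNIV :: 'a set)) = card (deg_le_vecs k t :: 'a poly vec set)"
    by (rule bij_betw_same_card[OF bij_betw_vec_of_coeffs])
  moreover have "card ({..<k} \<times> {..t} \<rightarrow>\<^sub>E (UNIV :: 'a set)) = CARD('a) ^ (k * (t + 1))"
    by (simp add: card_PiE card_cartesian_product)
  ultimately show ?thesis
    by simp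
qed

lemma degree_diff_monom_top:
  assumes "degree p \<le> Suc t"
  shows "degree (p - monom (coeff p (Suc t)) (Suc t)) \<le> t"
proof (rule degree_le, intro allI impI)
  fix j assume "t < j"
  then show "coeff (p - monom (coeff p (Suc t)) (Suc t)) j = 0"
    using assms by (cases "j = Suc t") (auto simp: coeff_monom intro: coeff_eq_0)
qed

lemma deg_le_vecs_Suc:
  "(deg_le_vecs k (Suc t) :: 'a::comm_ring_1 poly vec set) =
   (\<lambda>(u, c). u + monom 1 (Suc t) \<cdot>\<^sub>v c) ` (deg_le_vecs k t \<times> deg_le_vecs k 0)"
proof (intro equalityI subsetI)
  fix w :: "'a poly vec" assume w: "w \<in> deg_le_vecs k (Suc t)"
  let ?s = "Suc t"
  define u where "u = vec k (\<lambda>i. w $ i - monom (coeff (w $ i) ?s) ?s)"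
  define c where "c = vec k (\<lambda>i. [:coeff (w $ i) ?s:])"
  have "u \<in> deg_le_vecs k t"
    using w by (auto simp: deg_le_vecs_def u_def degree_diff_monom_top)
  moreover have "c \<in> deg_le_vecs k 0"
    by (simp add: deg_le_vecs_def c_def)
  moreover have "w = u + monom 1 ?s \<cdot>\<^sub>v c"
  proof (rule eq_vecI)
    have "monom 1 ?s * [:a:] = monom a ?s" for a :: 'a
      by (rule poly_eqI) (simp add: coeff_monom_mult coeff_monom)
    then show "w $ i = (u + monom 1 ?s \<cdot>\<^sub>v c) $ i" if "i < dim_vec (u + monom 1 ?s \<cdot>\<^sub>v c)" for i
      using that by (simp add: u_def c_def)
  qed (use w in \<open>simp add: deg_le_vecs_def u_def c_def\<close>)
  ultimately show "w \<in> (\<lambda>(u, c). u + monom 1 ?s \<cdot>\<^sub>v c) ` (deg_le_vecs k t \<times> deg_le_vecs k 0)"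
    by (intro image_eqI[where x="(u, c)"]) simp_all
next
  fix w :: "'a poly vec"
  assume "w \<in> (\<lambda>(u, c). u + monom 1 (Suc t) \<cdot>\<^sub>v c) ` (deg_le_vecs k t \<times> deg_le_vecs k 0)"
  then obtain u c where w: "w = u + monom 1 (Suc t) \<cdot>\<^sub>v c" "u \<in> deg_le_vecs k t" "c \<in> deg_le_vecs k 0"
    by auto
  have "degree (u $ i + monom 1 (Suc t) * c $ i) \<le> Suc t" if "i < k" for i
  proof (rule degree_add_le)
    show "degree (u $ i) \<le> Suc t"
      using w that by (auto simp: deg_le_vecs_def)
    have "degree (monom 1 (Suc t) * c $ i) \<le> degree (monom (1::'a) (Suc t)) + degree (c $ i)"
      by (rule degree_mult_le)
    then show "degree (monom 1 (Suc t) * c $ i) \<le> Suc t"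
      using w that by (auto simp: deg_le_vecs_def degree_monom_le order_trans)
  qed
  then show "w \<in> deg_le_vecs k (Suc t)"
    using w by (auto simp: deg_le_vecs_def)
qed

lemma UN_deg_le_vecs: "(\<Union>t. deg_le_vecs k t) = carrier_vec k"
proof (intro equalityI subsetI)
  fix u :: "'a poly vec" assume u: "u \<in> carrier_vec k"
  have "u \<in> deg_le_vecs k (Max ((\<lambda>i. degree (u $ i)) ` {..<k}))"
    using u by (auto simp: deg_le_vecs_def intro!: Max_ge)
  then show "u \<in> (\<Union>t. deg_le_vecs k t)"
    by blast
qed (auto simp: deg_le_vecs_def)

lemma row_deg_ge: "j < dim_col G \<Longrightarrow> degree (G $$ (i, j)) \<le> row_deg G i"
  unfolding row_deg_def by (auto intro!: Max_ge)

lemma deg_le_vecs_subset_carrier: "deg_le_vecs k t \<subseteq> carrier_vec k"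
  by (auto simp: deg_le_vecs_def)

lemma zero_in_deg_le_vecs: "0\<^sub>v k \<in> deg_le_vecs k t"
  by (simp add: deg_le_vecs_def)

lemma deg_le_vecs_add:
  "u \<in> deg_le_vecs k t \<Longrightarrow> v \<in> deg_le_vecs k t \<Longrightarrow> u + v \<in> (deg_le_vecs k t :: 'a::comm_monoid_add poly vec set)"
  by (auto simp: deg_le_vecs_def intro!: degree_add_le)

lemma deg_le_vecs_smult_const:
  "u \<in> deg_le_vecs k t \<Longrightarrow> [:l:] \<cdot>\<^sub>v u \<in> (deg_le_vecs k t :: 'a::idom poly vec set)"
  by (auto simp: deg_le_vecs_def intro: order_trans[OF degree_smult_le])

locale poly_encoder =
  fixes n k \<mu> :: nat and G :: "'a::{field,finite} poly mat"
  assumes n_pos: "0 < n" and G_carrier: "G \<in> carrier_mat k n"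
    and G_right_inverse: "\<exists>H. H \<in> carrier_mat n k \<and> G * H = 1\<^sub>m k"
    and G_degree_le: "\<And>l r. l < k \<Longrightarrow> r < n \<Longrightarrow> degree (G $$ (l, r)) \<le> \<mu>"
begin

definition encode :: "'a poly vec \<Rightarrow> nat \<Rightarrow> 'a" where
  "encode u = sigma n (transpose_mat G *\<^sub>v u)"

lemma transpose_G_carrier: "transpose_mat G \<in> carrier_mat n k"
  using G_carrier by simp

lemma encode_zero: "encode (0\<^sub>v k) = (\<lambda>_. 0)"
  using transpose_G_carrier n_pos by (simp add: encode_def sigma_def fun_eq_iff scalar_prod_def)

lemma encode_add:
  "u \<in> carrier_vec k \<Longrightarrow> v \<in> carrier_vec k \<Longrightarrow> encode (u + v) = (\<lambda>j. encode u j + encode v j)"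
  using transpose_G_carrier
  by (simp add: encode_def mult_add_distrib_mat_vec[OF transpose_G_carrier] sigma_add[OF n_pos])

lemma encode_smult_const: "u \<in> carrier_vec k \<Longrightarrow> encode ([:l:] \<cdot>\<^sub>v u) = (\<lambda>j. l * encode u j)"
  using transpose_G_carrier
  by (simp add: encode_def mult_mat_vec_smult_commute[OF transpose_G_carrier] sigma_smult_const[OF n_pos])

lemma encode_monom_mult:
  "u \<in> carrier_vec k \<Longrightarrow> encode (monom 1 s \<cdot>\<^sub>v u) = seq_shift (s * n) (encode u)"
  using transpose_G_carrier
  by (simp add: encode_def mult_mat_vec_smult_commute[OF transpose_G_carrier] sigma_monom_mult[OF n_pos])

lemma inj_on_encode: "inj_on encode (carrier_vec k)"
proof -
  obtain H where H: "H \<in> carrier_mat n k" "G * H = 1\<^sub>m k"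
    using G_right_inverse by blast
  have HG: "transpose_mat H * transpose_mat G = 1\<^sub>m k"
    using transpose_mult[OF G_carrier H(1)] H(2) by simp
  have "inj_on (\<lambda>u. transpose_mat G *\<^sub>v u) (carrier_vec k)"
  proof (rule inj_onI)
    fix u v :: "'a poly vec"
    assume uv: "u \<in> carrier_vec k" "v \<in> carrier_vec k" and eq: "transpose_mat G *\<^sub>v u = transpose_mat G *\<^sub>v v"
    have "w = transpose_mat H *\<^sub>v (transpose_mat G *\<^sub>v w)" if "w \<in> carrier_vec k" for w
      using that H(1) transpose_G_carrier by (simp flip: assoc_mult_mat_vec add: HG)
    then show "u = v"
      using uv eq by metis
  qed
  moreover have "inj_on (sigma n) ((\<lambda>u. transpose_mat G *\<^sub>v u) ` carrier_vec k)"
    using transpose_G_carrier by (intro inj_on_subset[OF sigma_inj_on[OF n_pos]]) auto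
  ultimately show ?thesis
    unfolding encode_def using comp_inj_on[of _ "carrier_vec k" "sigma n"] by (simp add: comp_def)
qed

lemma encode_nonzero_less:
  assumes u: "u \<in> deg_le_vecs k t" and i: "encode u i \<noteq> 0"
  shows "i < (t + 1) * n + n * \<mu>"
proof -
  have "degree ((transpose_mat G *\<^sub>v u) $ r) \<le> \<mu> + t" if r: "r < n" for r
  proof -
    have "(transpose_mat G *\<^sub>v u) $ r = (\<Sum>l<k. G $$ (l, r) * u $ l)"
      using G_carrier u r unfolding deg_le_vecs_def
      by (auto simp: scalar_prod_def lessThan_atLeast0 intro!: sum.cong)
    also have "degree \<dots> \<le> \<mu> + t"
    proof (rule degree_sum_le)
      fix l assume "l \<in> {..<k}"
      then have "degree (G $$ (l, r)) + degree (u $ l) \<le> \<mu> + t"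
        using G_degree_le[OF _ r] u by (intro add_mono) (auto simp: deg_le_vecs_def)
      then show "degree (G $$ (l, r) * u $ l) \<le> \<mu> + t"
        using degree_mult_le order_trans by blast
    qed simp
    finally show ?thesis .
  qed
  then have "i < (\<mu> + t + 1) * n"
    using sigma_nonzero_less[OF n_pos _ _ i[unfolded encode_def]] transpose_G_carrier u
    by (auto simp: deg_le_vecs_def)
  then show ?thesis
    by (simp add: algebra_simps)
qed

lemma encode_add_mem:
  assumes "x \<in> encode ` deg_le_vecs k t" "y \<in> encode ` deg_le_vecs k t"
  shows "(\<lambda>i. x i + y i) \<in> encode ` deg_le_vecs k t"
proof -
  obtain u v where uv: "u \<in> deg_le_vecs k t" "v \<in> deg_le_vecs k t" "x = encode u" "y = encode v"
    using assms by blast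
  moreover have "u \<in> carrier_vec k" "v \<in> carrier_vec k"
    using uv deg_le_vecs_subset_carrier by blast+
  ultimately have "(\<lambda>i. x i + y i) = encode (u + v)"
    by (simp add: encode_add)
  then show ?thesis
    using uv deg_le_vecs_add by blast
qed

lemma encode_scale_mem:
  assumes "x \<in> encode ` deg_le_vecs k t"
  shows "(\<lambda>i. l * x i) \<in> encode ` deg_le_vecs k t"
proof -
  obtain u where u: "u \<in> deg_le_vecs k t" "x = encode u"
    using assms by blast
  moreover have "u \<in> carrier_vec k"
    using u deg_le_vecs_subset_carrier by blast
  ultimately have "(\<lambda>i. l * x i) = encode ([:l:] \<cdot>\<^sub>v u)"
    by (simp add: encode_smult_const)
  then show ?thesis
    using u deg_le_vecs_smult_const by blast
qed

lemma encode_deg_le_vecs_Suc: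
  "encode ` deg_le_vecs k (Suc t) =
   {\<lambda>i. x i + seq_shift (Suc t * n) y i | x y. x \<in> encode ` deg_le_vecs k t \<and> y \<in> encode ` deg_le_vecs k 0}"
  (is "_ = ?R")
proof -
  let ?f = "\<lambda>(u, c). \<lambda>i. encode u i + seq_shift (Suc t * n) (encode c) i"
  have "encode (u + monom 1 (Suc t) \<cdot>\<^sub>v c) = ?f (u, c)"
    if "u \<in> deg_le_vecs k t" "c \<in> deg_le_vecs k 0" for u c
  proof -
    have "u \<in> carrier_vec k" "c \<in> carrier_vec k"
      using that deg_le_vecs_subset_carrier by blast+
    then show ?thesis
      by (simp add: encode_add encode_monom_mult)
  qed
  then have "encode ` deg_le_vecs k (Suc t) = ?f ` (deg_le_vecs k t \<times> deg_le_vecs k 0)"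
    unfolding deg_le_vecs_Suc image_image by (intro image_cong) auto
  also have "\<dots> = ?R"
  proof (intro equalityI subsetI)
    fix z assume "z \<in> ?f ` (deg_le_vecs k t \<times> deg_le_vecs k 0)"
    then obtain u c where "u \<in> deg_le_vecs k t" "c \<in> deg_le_vecs k 0" "z = ?f (u, c)"
      by auto
    then show "z \<in> ?R"
      by auto
  next
    fix z assume "z \<in> ?R"
    then obtain u c where "u \<in> deg_le_vecs k t" "c \<in> deg_le_vecs k 0" "z = ?f (u, c)"
      by auto
    then show "z \<in> ?f ` (deg_le_vecs k t \<times> deg_le_vecs k 0)"
      by (intro image_eqI[where x="(u, c)"]) simp_all
  qed
  finally show ?thesis .
qed

lemma card_encode_deg_le_vecs: "card (encode ` deg_le_vecs k t) = CARD('a) ^ ((t + 1) * k)"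
  using card_image[OF inj_on_subset[OF inj_on_encode deg_le_vecs_subset_carrier]] card_deg_le_vecs
  by (simp add: mult.commute)

lemma selforthogonal_filtration_encode:
  assumes "\<And>v w. v \<in> encode ` carrier_vec k \<Longrightarrow> w \<in> encode ` carrier_vec k \<Longrightarrow> dotp v w = 0"
  shows "selforthogonal_filtration n (n * \<mu>) k (encode ` carrier_vec k) (\<lambda>t. encode ` deg_le_vecs k t)"
proof
  show "(\<lambda>_. 0) \<in> encode ` deg_le_vecs k t" for t
    using zero_in_deg_le_vecs encode_zero by (metis image_eqI)
  show "x i \<noteq> 0 \<Longrightarrow> i < (t + 1) * n + n * \<mu>" if "x \<in> encode ` deg_le_vecs k t" for x t i
    using that encode_nonzero_less by blast
  show "encode ` carrier_vec k = (\<Union>t. encode ` deg_le_vecs k t)"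
    unfolding UN_deg_le_vecs[symmetric, of k] by blast
qed (use assms in \<open>auto intro: encode_add_mem encode_scale_mem
    simp: encode_deg_le_vecs_Suc card_encode_deg_le_vecs\<close>)

end

section \<open>Change of field and the degree\<close>

definition conv_generator :: "nat \<Rightarrow> nat \<Rightarrow> nat \<Rightarrow> nat \<Rightarrow> 'a::field poly mat \<Rightarrow> bool" where
  "conv_generator n k \<delta> \<mu> G \<longleftrightarrow>
     G \<in> carrier_mat k n \<and> (\<exists>H. H \<in> carrier_mat n k \<and> G * H = 1\<^sub>m k) \<and>
     \<delta> = (\<Sum>i<k. row_deg G i) \<and>
     \<delta> = Max {degree (det (submatrix G {..<k} J)) | J. J \<subseteq> {..<n} \<and> card J = k} \<and>
     \<mu> = Max (insert 0 (row_deg G ` {..<k}))"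

lemma is_conv_code_iff:
  "is_conv_code n k \<delta> \<mu> C \<longleftrightarrow>
   (\<exists>G. conv_generator n k \<delta> \<mu> G \<and> C = {transpose_mat G *\<^sub>v u | u. u \<in> carrier_vec k})"
  unfolding is_conv_code_def conv_generator_def by blast

lemma poly_encoder_if_conv_generator:
  assumes "0 < n" "conv_generator n k \<delta> \<mu> (G :: 'a::{field,finite} poly mat)"
  shows "poly_encoder n k \<mu> G"
proof
  show "degree (G $$ (l, r)) \<le> \<mu>" if "l < k" "r < n" for l r
  proof -
    have "G \<in> carrier_mat k n"
      using assms(2) by (simp add: conv_generator_def)
    then have "degree (G $$ (l, r)) \<le> row_deg G l"
      using that by (intro row_deg_ge) simp
    also have "\<dots> \<le> \<mu>"
      using assms(2) that by (auto simp: conv_generator_def intro!: Max_ge)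
    finally show ?thesis .
  qed
qed (use assms in \<open>auto simp: conv_generator_def\<close>)

lemma submatrix_map_mat: "submatrix (map_mat f A) I J = map_mat f (submatrix A I J)"
proof (rule eq_matI)
  fix i j
  assume "i < dim_row (map_mat f (submatrix A I J))" "j < dim_col (map_mat f (submatrix A I J))"
  then have "i < card {i. i < dim_row A \<and> i \<in> I}" "j < card {j. j < dim_col A \<and> j \<in> J}"
    by (simp_all add: dim_submatrix)
  moreover from this have "pick I i < dim_row A" "pick J j < dim_col A"
    using pick_le by blast+
  ultimately show "submatrix (map_mat f A) I J $$ (i, j) = map_mat f (submatrix A I J) $$ (i, j)"
    by (simp add: submatrix_index dim_submatrix)
qed (simp_all add: dim_submatrix)

lemma conv_generator_map_poly:
  assumes "field_hom emb" and gen: "conv_generator n k \<delta> \<mu> G"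
  shows "conv_generator n k \<delta> \<mu> (map_mat (map_poly emb) G)"
proof -
  interpret field_hom emb
    by fact
  interpret P: map_poly_inj_idom_hom emb ..
  let ?G = "map_mat (map_poly emb) G"
  obtain H where G: "G \<in> carrier_mat k n" "H \<in> carrier_mat n k" "G * H = 1\<^sub>m k"
    using gen by (auto simp: conv_generator_def)
  have "?G * map_mat (map_poly emb) H = 1\<^sub>m k"
    using P.mat_hom_mult[OF G(1,2)] G(3) P.mat_hom_one by simp
  moreover have "row_deg ?G i = row_deg G i" if "i < k" for i
  proof -
    have "(\<lambda>j. degree (?G $$ (i, j))) ` {j. j < n} = (\<lambda>j. degree (G $$ (i, j))) ` {j. j < n}"
      using that G(1) by (intro image_cong) auto
    then show ?thesis
      using G(1) by (simp add: row_deg_def setcompr_eq_image)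
  qed
  moreover have "degree (det (submatrix ?G {..<k} J)) = degree (det (submatrix G {..<k} J))" for J
    by (simp add: submatrix_map_mat)
  ultimately show ?thesis
    using gen G(1,2) unfolding conv_generator_def by (auto intro!: exI[of _ "map_mat (map_poly emb) H"])
qed

lemma field_homI:
  fixes f :: "'a::field \<Rightarrow> 'b::field"
  assumes "f 1 = 1" "\<And>x y. f (x + y) = f x + f y" "\<And>x y. f (x * y) = f x * f y"
  shows "field_hom f"
proof -
  have "f 0 + f 0 = f 0"
    using assms(2)[of 0 0] by simp
  then have "f 0 = 0"
    by (simp only: add_cancel_left_right)
  then show ?thesis
    by unfold_locales (simp_all add: assms)
qed

lemma bij_normal_basis_coords:
  fixes emb :: "'a::{field,finite} \<Rightarrow> 'b::{field,finite}"
  assumes card: "CARD('b) = CARD('a) ^ 2" and "field_hom emb"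
    and indep: "\<And>x y. \<beta> * emb x + \<beta> ^ CARD('a) * emb y = 0 \<Longrightarrow> x = 0 \<and> y = 0"
  shows "bij (\<lambda>(x, y). \<beta> * emb x + \<beta> ^ CARD('a) * emb y)"
proof -
  interpret field_hom emb
    by fact
  let ?f = "\<lambda>(x, y). \<beta> * emb x + \<beta> ^ CARD('a) * emb y"
  have "inj ?f"
  proof (rule injI)
    fix p q :: "'a \<times> 'a"
    assume "?f p = ?f q"
    then have "\<beta> * emb (fst p - fst q) + \<beta> ^ CARD('a) * emb (snd p - snd q) = 0"
      by (cases p, cases q) (simp add: hom_minus algebra_simps)
    then have "fst p - fst q = 0 \<and> snd p - snd q = 0"
      by (rule indep)
    then show "p = q"
      by (simp add: prod_eq_iff)
  qed
  moreover have "card (range ?f) = CARD('b)"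
    using \<open>inj ?f\<close> card by (simp add: card_image power2_eq_square)
  ultimately show ?thesis
    by (simp add: bij_def card_eq_UNIV_imp_eq_UNIV)
qed

definition normal_comb ::
  "('a::{field,finite} \<Rightarrow> 'b::field) \<Rightarrow> 'b \<Rightarrow> 'a poly vec \<Rightarrow> 'a poly vec \<Rightarrow> 'b poly vec" where
  "normal_comb emb \<beta> u1 u2 =
     [:\<beta>:] \<cdot>\<^sub>v map_vec (map_poly emb) u1 + [:\<beta> ^ CARD('a):] \<cdot>\<^sub>v map_vec (map_poly emb) u2"

lemma normal_comb_carrier:
  "u1 \<in> carrier_vec k \<Longrightarrow> u2 \<in> carrier_vec k \<Longrightarrow> normal_comb emb \<beta> u1 u2 \<in> carrier_vec k"
  by (simp add: normal_comb_def)

lemma normal_comb_surj: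
  fixes emb :: "'a::{field,finite} \<Rightarrow> 'b::{field,finite}"
  assumes hom: "field_hom emb" and bij: "bij (\<lambda>(x, y). \<beta> * emb x + \<beta> ^ CARD('a) * emb y)"
    and u: "u \<in> carrier_vec k"
  shows "\<exists>u1\<in>carrier_vec k. \<exists>u2\<in>carrier_vec k. u = normal_comb emb \<beta> u1 u2"
proof -
  interpret field_hom emb
    by (fact hom)
  let ?f = "\<lambda>(x, y). \<beta> * emb x + \<beta> ^ CARD('a) * emb y"
  define g where "g = inv_into UNIV ?f"
  have fg: "?f (g z) = z" for z
    unfolding g_def using bij by (simp add: bij_def f_inv_into_f)
  have g0: "g 0 = (0, 0)"
    unfolding g_def using bij inv_into_f_f[of ?f UNIV "(0, 0)"] by (simp add: bij_def)
  define u1 where "u1 = map_vec (map_poly (\<lambda>z. fst (g z))) u"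
  define u2 where "u2 = map_vec (map_poly (\<lambda>z. snd (g z))) u"
  have "u = normal_comb emb \<beta> u1 u2"
  proof (rule eq_vecI)
    fix i assume "i < dim_vec (normal_comb emb \<beta> u1 u2)"
    then have i: "i < dim_vec u"
      by (simp add: normal_comb_def u1_def u2_def)
    show "u $ i = normal_comb emb \<beta> u1 u2 $ i"
    proof (rule poly_eqI)
      show "coeff (u $ i) d = coeff (normal_comb emb \<beta> u1 u2 $ i) d" for d
        using i fg[of "coeff (u $ i) d"] g0
        by (simp add: normal_comb_def u1_def u2_def coeff_map_poly case_prod_beta)
    qed
  qed (simp add: normal_comb_def u1_def u2_def)
  moreover have "u1 \<in> carrier_vec k" "u2 \<in> carrier_vec k"
    using u by (simp_all add: u1_def u2_def)
  ultimately show ?thesis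
    by blast
qed

lemma (in poly_encoder) sigma_mult_normal_comb:
  fixes emb :: "'a \<Rightarrow> 'b::{field,finite}"
  assumes hom: "field_hom emb" and u: "u1 \<in> carrier_vec k" "u2 \<in> carrier_vec k"
  shows "sigma n (transpose_mat (map_mat (map_poly emb) G) *\<^sub>v normal_comb emb \<beta> u1 u2) =
    tau emb \<beta> (0, encode u1, encode u2)"
proof -
  interpret field_hom emb
    by (fact hom)
  interpret P: map_poly_inj_idom_hom emb ..
  let ?h = "map_poly emb"
  let ?Gt = "transpose_mat (map_mat ?h G)"
  have Gt: "?Gt = map_mat ?h (transpose_mat G)"
    by (simp add: map_mat_transpose)
  have Gt_carrier: "?Gt \<in> carrier_mat n k"
    using transpose_G_carrier by (simp add: Gt)
  have "?Gt *\<^sub>v normal_comb emb \<beta> u1 u2 =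
    [:\<beta>:] \<cdot>\<^sub>v (?Gt *\<^sub>v map_vec ?h u1) + [:\<beta> ^ CARD('a):] \<cdot>\<^sub>v (?Gt *\<^sub>v map_vec ?h u2)"
    using u by (simp add: normal_comb_def mult_add_distrib_mat_vec[OF Gt_carrier]
        mult_mat_vec_smult_commute[OF Gt_carrier])
  also have "\<dots> =
    [:\<beta>:] \<cdot>\<^sub>v map_vec ?h (transpose_mat G *\<^sub>v u1) + [:\<beta> ^ CARD('a):] \<cdot>\<^sub>v map_vec ?h (transpose_mat G *\<^sub>v u2)"
    using u transpose_G_carrier by (simp add: Gt P.mult_mat_vec_hom)
  finally show ?thesis
    using u transpose_G_carrier n_pos
    by (simp add: sigma_add sigma_smult_const sigma_map_poly encode_def tau_def fun_eq_iff)
qed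

lemma (in poly_encoder) tau_xz_group_encode:
  fixes emb :: "'a \<Rightarrow> 'b::{field,finite}" and \<beta> :: 'b
  assumes hom: "field_hom emb" and bij: "bij (\<lambda>(x, y). \<beta> * emb x + \<beta> ^ CARD('a) * emb y)"
  shows "tau emb \<beta> ` xz_group (encode ` carrier_vec k) =
    sigma n ` {transpose_mat (map_mat (map_poly emb) G) *\<^sub>v u | u. u \<in> carrier_vec k}"
proof (intro equalityI subsetI)
  let ?Gt = "transpose_mat (map_mat (map_poly emb) G)"
  fix x assume "x \<in> tau emb \<beta> ` xz_group (encode ` carrier_vec k)"
  then obtain u1 u2 where u: "u1 \<in> carrier_vec k" "u2 \<in> carrier_vec k"
    and x: "x = tau emb \<beta> (0, encode u1, encode u2)"
    by (auto simp: xz_group_def)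
  then have "?Gt *\<^sub>v normal_comb emb \<beta> u1 u2 \<in> {?Gt *\<^sub>v u | u. u \<in> carrier_vec k}"
    using normal_comb_carrier by blast
  then show "x \<in> sigma n ` {?Gt *\<^sub>v u | u. u \<in> carrier_vec k}"
  proof (rule rev_image_eqI)
    show "x = sigma n (?Gt *\<^sub>v normal_comb emb \<beta> u1 u2)"
      using sigma_mult_normal_comb[OF hom u] x by simp
  qed
next
  let ?Gt = "transpose_mat (map_mat (map_poly emb) G)"
  fix x assume "x \<in> sigma n ` {?Gt *\<^sub>v u | u. u \<in> carrier_vec k}"
  then obtain u where "u \<in> carrier_vec k" "x = sigma n (?Gt *\<^sub>v u)"
    by blast
  then obtain u1 u2 where u: "u1 \<in> carrier_vec k" "u2 \<in> carrier_vec k"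
    and "x = sigma n (?Gt *\<^sub>v normal_comb emb \<beta> u1 u2)"
    using normal_comb_surj[OF hom bij] by blast
  then have "x = tau emb \<beta> (0, encode u1, encode u2)"
    using sigma_mult_normal_comb[OF hom u] by simp
  moreover have "(0, encode u1, encode u2) \<in> xz_group (encode ` carrier_vec k)"
    using u by (auto simp: xz_group_def)
  ultimately show "x \<in> tau emb \<beta> ` xz_group (encode ` carrier_vec k)"
    by blast
qed

theorem mainTheorem5:
  fixes C :: "'a::{field,finite} poly vec set"
    and n k \<delta> \<mu> :: nat
    and emb :: "'a \<Rightarrow> 'b::{field,finite}" and \<beta> :: 'b
  assumes "0 < n" and "k \<le> n" and "even (n - k)"
    and "is_conv_code n ((n - k) div 2) \<delta> \<mu> C"
    and "sigma n ` C \<subseteq> edual (sigma n ` C)"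
    and "CARD('b) = CARD('a) ^ 2"
    and "inj emb" and "emb 1 = 1"
    and "\<And>x y. emb (x + y) = emb x + emb y" and "\<And>x y. emb (x * y) = emb x * emb y"
    and "\<And>x y. \<beta> * emb x + \<beta> ^ CARD('a) * emb y = 0 \<Longrightarrow> x = 0 \<and> y = 0"
  shows "\<exists>S0 :: 'a pauli set.
           conv_stab_code n k (n * \<mu>) S0 \<and>
           qdegree_is emb \<beta> n S0 \<delta> \<and>
           free_dist n S0 = wt_set (edual (sigma n ` C) - sigma n ` C) \<and>
           (wt_set (edual (sigma n ` C) - sigma n ` C) = wt_set (edual (sigma n ` C))
              \<longrightarrow> pure_code n S0)"
proof -
  define k' where "k' = (n - k) div 2"
  obtain G where G: "conv_generator n k' \<delta> \<mu> G" and C: "C = {transpose_mat G *\<^sub>v u | u. u \<in> carrier_vec k'}"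
    using assms(4) unfolding is_conv_code_iff k'_def by blast
  interpret E: poly_encoder n k' \<mu> G
    using assms(1) G by (rule poly_encoder_if_conv_generator)
  have L: "sigma n ` C = E.encode ` carrier_vec k'"
    unfolding C E.encode_def by blast
  interpret selforthogonal_filtration n "n * \<mu>" k' "sigma n ` C" "\<lambda>t. E.encode ` deg_le_vecs k' t"
    unfolding L using assms(5) by (intro E.selforthogonal_filtration_encode) (auto simp: L edual_eq)
  have hom: "field_hom emb"
    using assms(8-10) by (rule field_homI)
  have "is_conv_code n k' \<delta> \<mu> {transpose_mat (map_mat (map_poly emb) G) *\<^sub>v u | u. u \<in> carrier_vec k'}"
    using conv_generator_map_poly[OF hom G] unfolding is_conv_code_iff by blast
  moreover have "tau emb \<beta> ` xz_group (E.encode ` carrier_vec k') =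
    sigma n ` {transpose_mat (map_mat (map_poly emb) G) *\<^sub>v u | u. u \<in> carrier_vec k'}"
    by (rule E.tau_xz_group_encode[OF hom bij_normal_basis_coords[OF assms(6) hom assms(11)]])
  ultimately have "qdegree_is emb \<beta> n S0 \<delta>"
    unfolding qdegree_is_def Stab_eq L by blast
  moreover have "n - k = 2 * k'"
    using assms(3) by (simp add: k'_def)
  ultimately show ?thesis
    using conv_stab_code_xz free_dist_xz pure_xz by (intro exI[of _ S0]) blast
qed

end
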